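(* Let $A,\Delta A\in\mathbb{R}^{n\times m}$, $\widetilde A=A+\Delta A$, $1\le r<\min\{n,m\}$, $\operatorname{rank}(A)\ge r$, and assume $\sigma_r-\widetilde\sigma_{r+1}>0$ and $\widetilde\sigma_r-\sigma_{r+1}>0$. Then \[\|\sin\Theta(U_1,\widetilde U_1)\|\le\min\Big\{\frac{\widetilde\sigma_r\|(\Delta A)\widetilde V_1\|+\sigma_{r+1}\|(\Delta A)^T\widetilde U_1\|}{\widetilde\sigma_r^2-\sigma_{r+1}^2},\ \frac{\sigma_r\|(\Delta A)V_1\|+\widetilde\sigma_{r+1}\|U_1^T(\Delta A)\|}{\sigma_r^2-\widetilde\sigma_{r+1}^2}\Big\},\] \[\|\sin\Theta(V_1,\widetilde V_1)\|\le\min\Big\{\frac{\widetilde\sigma_r\|\widetilde U_1^T(\Delta A)\|+\sigma_{r+1}\|(\Delta A)\widetilde V_1\|}{\widetilde\sigma_r^2-\sigma_{r+1}^2},\ \frac{\sigma_r\|U_1^T(\Delta A)\|+\widetilde\sigma_{r+1}\|(\Delta A)V_1\|}{\sigma_r^2-\widetilde\sigma_{r+1}^2}\Big\}.\] Moreover, \[\max\{\|\sin\Theta(U_1,\widetilde U_1)\|,\|\sin\Theta(V_1,\widetilde V_1)\|\}\le\min\Big\{\frac{1}{\sigma_r-\widetilde\sigma_{r+1}},\frac{1}{\widetilde\sigma_r-\sigma_{r+1}}\Big\}\|\Delta A\|.\]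
   Context: $\sigma_1\ge\sigma_2\ge\dots$ and $\widetilde\sigma_1\ge\widetilde\sigma_2\ge\dots$ are the singular values of $A$ and $\widetilde A$ (set to $0$ for indices exceeding $\min\{n,m\}$). $U_1\in\mathbb{R}^{n\times r}$, $V_1\in\mathbb{R}^{m\times r}$ are matrices whose columns are the leading $r$ left, resp. right, singular vectors of $A$ (from a full SVD $A=U\Sigma V^T$), and $\widetilde U_1,\widetilde V_1$ are the analogous matrices for $\widetilde A$. $\|\cdot\|$ is the spectral norm. For $X,\widetilde X\in\mathbb{R}^{d\times r}$ with orthonormal columns, if $\zeta_1\ge\dots\ge\zeta_r$ are the singular values of $X^T\widetilde X$, then $\sin\Theta(X,\widetilde X)=\mathrm{diag}(\sqrt{1-\zeta_1^2},\dots,\sqrt{1-\zeta_r^2})$. *)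

theory Defs
  imports "Jordan_Normal_Form.DL_Rank" "Jordan_Normal_Form.Matrix"
begin

definition is_svd :: "real mat \<Rightarrow> real mat \<Rightarrow> real mat \<Rightarrow> real mat \<Rightarrow> bool" where
  "is_svd A U S V \<longleftrightarrow>
     (let n = dim_row A; m = dim_col A in
      U \<in> carrier_mat n n \<and> V \<in> carrier_mat m m \<and> S \<in> carrier_mat n m \<and>
      transpose_mat U * U = 1\<^sub>m n \<and> transpose_mat V * V = 1\<^sub>m m \<and>
      diagonal_mat S \<and>
      (\<forall>i < min n m. 0 \<le> S $$ (i,i)) \<and>
      (\<forall>i j. i \<le> j \<and> j < min n m \<longrightarrow> S $$ (j,j) \<le> S $$ (i,i)) \<and>
      A = U * S * transpose_mat V)"

(* i-th (1-based) diagonal entry of a rectangular diagonal S; 0 beyond min{n,m} *)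
definition sval :: "real mat \<Rightarrow> nat \<Rightarrow> real" where
  "sval S i = (if 1 \<le> i \<and> i \<le> min (dim_row S) (dim_col S) then S $$ (i-1, i-1) else 0)"

definition sing_val :: "real mat \<Rightarrow> nat \<Rightarrow> real" where
  "sing_val M i = sval (SOME S. \<exists>U V. is_svd M U S V) i"

definition lead_cols :: "real mat \<Rightarrow> nat \<Rightarrow> real mat" where
  "lead_cols X r = mat (dim_row X) r (\<lambda>(i,j). X $$ (i,j))"

definition vnorm :: "real vec \<Rightarrow> real" where
  "vnorm v = sqrt (\<Sum>i<dim_vec v. (v $ i)^2)"

definition spec_norm :: "real mat \<Rightarrow> real" where
  "spec_norm M = Sup (insert 0 {vnorm (M *\<^sub>v x) | x. x \<in> carrier_vec (dim_col M) \<and> vnorm x = 1})"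

definition sin_theta :: "real mat \<Rightarrow> real mat \<Rightarrow> real mat" where
  "sin_theta X Xt = mat (dim_col X) (dim_col X)
     (\<lambda>(i,j). if i = j then sqrt (1 - (sing_val (transpose_mat X * Xt) (i+1))^2) else 0)"

end

(* For M = U1^T Ut1 let x be a unit eigenvector of M^T M with eigenvalue mu, so that 1 - mu is
   the square of an entry of sin Theta(U1, Ut1). The part w of y = Ut1 x orthogonal to the range
   of U1 satisfies Ut1^T w = (1 - mu) x and |w|^2 = 1 - mu. Pair w with
   Ut1 D^2 x = (A + dA) (A + dA)^T y = A A^T y + A dA^T y + dA Vt1 D x, where D is the leading
   r x r block of St. As A^T maps vectors orthogonal to the range of U1 to vectors at most
   sigma_(r+1) times as long, this gives, with tau = |D x| >= sigmat_r,
     (1 - mu) tau^2 <= sigma_(r+1)^2 (1 - mu) + sqrt (1 - mu) (sigma_(r+1) |dA^T Ut1| + tau |dA Vt1|),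
   and the resulting bound on sqrt (1 - mu) decreases in tau, so tau may be replaced by sigmat_r.
   Exchanging A and A + dA bounds the eigenvalues of M M^T instead; both M^T M and M M^T have the
   squared singular values of M as eigenvalues, which yields the two bounds for U. Transposition
   gives those for V, and |dA X| <= |dA| for X with orthonormal columns gives the last claim.
   Since sing_val chooses some SVD, the argument needs that square matrices have one; this comes
   from the spectral theorem for real symmetric matrices, proved by deflation at the largest
   eigenvalue. *)

theory Submission
  imports Defs "HOL-Analysis.L2_Norm" "Jordan_Normal_Form.Spectral_Radius"
begin

section \<open>Euclidean and spectral norms\<close>

lemma vnorm_eq_sqrt_scalar_prod: "vnorm v = sqrt ((v :: real vec) \<bullet> v)"
  unfolding vnorm_def scalar_prod_def by (simp add: atLeast0LessThan power2_eq_square)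

lemma scalar_prod_self_nonneg: "0 \<le> (v :: real vec) \<bullet> v"
  unfolding scalar_prod_def by (simp add: sum_nonneg)

lemma vnorm_nonneg: "0 \<le> vnorm v"
  unfolding vnorm_def by (simp add: sum_nonneg)

lemma vnorm_power2: "(vnorm v)\<^sup>2 = (v :: real vec) \<bullet> v"
  unfolding vnorm_eq_sqrt_scalar_prod using scalar_prod_self_nonneg by simp

lemma vnorm_power2_sum: "x \<in> carrier_vec r \<Longrightarrow> (vnorm x)\<^sup>2 = (\<Sum>j<r. (x $ j)\<^sup>2)"
  unfolding vnorm_def by (simp add: sum_nonneg)

lemma vnorm_smult: "vnorm (c \<cdot>\<^sub>v v) = \<bar>c\<bar> * vnorm v"
  unfolding vnorm_def by (simp add: power_mult_distrib real_sqrt_mult flip: sum_distrib_left)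

lemma vnorm_uminus: "vnorm (- v) = vnorm v"
  unfolding vnorm_def by simp

lemma vnorm_eq_0_iff:
  assumes "v \<in> carrier_vec n"
  shows "vnorm v = 0 \<longleftrightarrow> v = 0\<^sub>v n"
  using assms unfolding vnorm_def by (auto simp: sum_nonneg_eq_0_iff vec_eq_iff)

lemma scalar_prod_le_vnorm:
  assumes "v \<in> carrier_vec n" "w \<in> carrier_vec n"
  shows "v \<bullet> w \<le> vnorm v * vnorm w"
proof -
  have "v \<bullet> w \<le> (\<Sum>i<n. \<bar>v $ i\<bar> * \<bar>w $ i\<bar>)"
    using assms unfolding scalar_prod_def atLeast0LessThan
    by (auto intro!: sum_mono simp flip: abs_mult)
  also have "\<dots> \<le> L2_set (\<lambda>i. v $ i) {..<n} * L2_set (\<lambda>i. w $ i) {..<n}"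
    by (rule L2_set_mult_ineq)
  finally show ?thesis
    using assms by (simp add: vnorm_def L2_set_def)
qed

lemma orthonormal_scalar_prod:
  fixes Q :: "real mat"
  assumes Q: "Q \<in> carrier_mat k l" "transpose_mat Q * Q = 1\<^sub>m l"
    and v: "v \<in> carrier_vec l" and w: "w \<in> carrier_vec l"
  shows "(Q *\<^sub>v v) \<bullet> (Q *\<^sub>v w) = v \<bullet> w"
proof -
  have "(Q *\<^sub>v v) \<bullet> (Q *\<^sub>v w) = (transpose_mat Q *\<^sub>v (Q *\<^sub>v w)) \<bullet> v"
    using Q v w by (simp add: transpose_vec_mult_scalar comm_scalar_prod[of _ k])
  also have "\<dots> = v \<bullet> w"
    using Q v w by (simp flip: assoc_mult_mat_vec add: comm_scalar_prod[of _ l])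
  finally show ?thesis .
qed

lemma orthonormal_vnorm:
  fixes Q :: "real mat"
  assumes "Q \<in> carrier_mat k l" "transpose_mat Q * Q = 1\<^sub>m l" "v \<in> carrier_vec l"
  shows "vnorm (Q *\<^sub>v v) = vnorm v"
  using orthonormal_scalar_prod[OF assms assms(3)] by (simp add: vnorm_eq_sqrt_scalar_prod)

lemma orthogonal_mult_transpose:
  fixes Q :: "real mat"
  assumes "Q \<in> carrier_mat n n" "transpose_mat Q * Q = 1\<^sub>m n"
  shows "Q * transpose_mat Q = 1\<^sub>m n"
  using mat_mult_left_right_inverse[of "transpose_mat Q" n Q] assms by auto

lemma vnorm_mult_mat_vec_le_entries:
  fixes M :: "real mat"
  assumes M: "M \<in> carrier_mat a b" and x: "x \<in> carrier_vec b" "vnorm x = 1"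
  shows "vnorm (M *\<^sub>v x) \<le> (\<Sum>i<a. \<Sum>j<b. \<bar>M $$ (i,j)\<bar>)"
proof -
  have x_le_1: "\<bar>x $ j\<bar> \<le> 1" if "j < b" for j
  proof -
    have "(x $ j)\<^sup>2 \<le> (\<Sum>i<b. (x $ i)\<^sup>2)"
      using that by (intro member_le_sum) auto
    also have "\<dots> = 1" using x unfolding vnorm_def by simp
    finally show ?thesis by (simp add: abs_square_le_1)
  qed
  have "vnorm (M *\<^sub>v x) \<le> (\<Sum>i<a. \<bar>(M *\<^sub>v x) $ i\<bar>)"
    using M L2_set_le_sum_abs[of "\<lambda>i. (M *\<^sub>v x) $ i" "{..<a}"]
    by (simp add: vnorm_def L2_set_def)
  also have "\<dots> \<le> (\<Sum>i<a. \<Sum>j<b. \<bar>M $$ (i,j)\<bar>)"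
  proof (rule sum_mono)
    fix i assume "i \<in> {..<a}"
    then have "\<bar>(M *\<^sub>v x) $ i\<bar> \<le> (\<Sum>j<b. \<bar>M $$ (i,j)\<bar> * \<bar>x $ j\<bar>)"
      using M x by (auto simp: scalar_prod_def atLeast0LessThan abs_mult intro: order_trans[OF sum_abs])
    also have "\<dots> \<le> (\<Sum>j<b. \<bar>M $$ (i,j)\<bar>)"
      by (intro sum_mono) (simp add: mult_left_le x_le_1)
    finally show "\<bar>(M *\<^sub>v x) $ i\<bar> \<le> (\<Sum>j<b. \<bar>M $$ (i,j)\<bar>)" .
  qed
  finally show ?thesis .
qed

lemma spec_norm_bdd_above:
  fixes M :: "real mat"
  shows "bdd_above (insert 0 {vnorm (M *\<^sub>v x) | x. x \<in> carrier_vec (dim_col M) \<and> vnorm x = 1})"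
  by (rule bdd_aboveI[where M = "\<Sum>i<dim_row M. \<Sum>j<dim_col M. \<bar>M $$ (i,j)\<bar>"])
    (auto intro!: vnorm_mult_mat_vec_le_entries sum_nonneg)

lemma spec_norm_nonneg: "0 \<le> spec_norm M"
  unfolding spec_norm_def by (rule cSup_upper[OF _ spec_norm_bdd_above]) auto

lemma spec_norm_leI:
  fixes M :: "real mat"
  assumes M: "M \<in> carrier_mat a b" and "0 \<le> c"
    and bound: "\<And>x. x \<in> carrier_vec b \<Longrightarrow> vnorm (M *\<^sub>v x) \<le> c * vnorm x"
  shows "spec_norm M \<le> c"
  unfolding spec_norm_def using assms by (intro cSup_least) (auto, metis bound mult.right_neutral)

lemma vnorm_mult_mat_vec_le:
  fixes M :: "real mat"
  assumes M: "M \<in> carrier_mat a b" and x: "x \<in> carrier_vec b"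
  shows "vnorm (M *\<^sub>v x) \<le> spec_norm M * vnorm x"
proof (cases "x = 0\<^sub>v b")
  case True
  then show ?thesis using M by (simp add: vnorm_def)
next
  case False
  then have x_pos: "0 < vnorm x"
    using vnorm_eq_0_iff[OF x] vnorm_nonneg[of x] by linarith
  define u where "u = (1 / vnorm x) \<cdot>\<^sub>v x"
  have "vnorm (M *\<^sub>v u) \<le> spec_norm M"
    unfolding spec_norm_def using M x x_pos
    by (intro cSup_upper[OF _ spec_norm_bdd_above]) (auto simp: u_def vnorm_smult)
  moreover have "M *\<^sub>v x = vnorm x \<cdot>\<^sub>v (M *\<^sub>v u)"
    using M x x_pos by (simp add: u_def mult_mat_vec smult_smult_assoc)
  ultimately show ?thesis
    using x_pos by (simp add: vnorm_smult mult.commute)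
qed

lemma spec_norm_transpose_le:
  fixes M :: "real mat"
  assumes M: "M \<in> carrier_mat a b"
  shows "spec_norm (transpose_mat M) \<le> spec_norm M"
proof (rule spec_norm_leI[of _ b a, OF _ spec_norm_nonneg])
  fix z :: "real vec" assume z: "z \<in> carrier_vec a"
  define u where "u = transpose_mat M *\<^sub>v z"
  have u: "u \<in> carrier_vec b" using M z by (simp add: u_def)
  have "(vnorm u)\<^sup>2 = z \<bullet> (M *\<^sub>v u)"
    using M z u by (simp add: vnorm_power2 u_def transpose_vec_mult_scalar)
  also have "\<dots> \<le> vnorm z * (spec_norm M * vnorm u)"
    using M z u vnorm_mult_mat_vec_le[OF M u] vnorm_nonneg[of z]
    by (intro order_trans[OF scalar_prod_le_vnorm[of _ a]] mult_left_mono) auto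
  finally have "vnorm u * vnorm u \<le> (spec_norm M * vnorm z) * vnorm u"
    by (simp add: power2_eq_square ac_simps)
  then show "vnorm (transpose_mat M *\<^sub>v z) \<le> spec_norm M * vnorm z"
    using vnorm_nonneg[of u] spec_norm_nonneg[of M] vnorm_nonneg[of z]
    by (cases "vnorm u = 0") (auto simp: u_def)
qed (use M in auto)

lemma spec_norm_transpose: "spec_norm (transpose_mat M) = spec_norm (M :: real mat)"
proof -
  have "M \<in> carrier_mat (dim_row M) (dim_col M)" by auto
  then show ?thesis
    using spec_norm_transpose_le[of M] spec_norm_transpose_le[of "transpose_mat M"]
    by (metis order_antisym transpose_carrier_mat transpose_transpose)
qed

lemma spec_norm_uminus: "spec_norm (- M) = spec_norm (M :: real mat)"
proof -
  have "vnorm (- M *\<^sub>v x) = vnorm (M *\<^sub>v x)" if "x \<in> carrier_vec (dim_col M)" for x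
    using that by (simp add: vnorm_uminus)
  then have "{vnorm (- M *\<^sub>v x) | x. x \<in> carrier_vec (dim_col M) \<and> vnorm x = 1}
      = {vnorm (M *\<^sub>v x) | x. x \<in> carrier_vec (dim_col M) \<and> vnorm x = 1}"
    by force
  then show ?thesis unfolding spec_norm_def by simp
qed

lemma spec_norm_mult_le:
  fixes A B :: "real mat"
  assumes A: "A \<in> carrier_mat a b" and B: "B \<in> carrier_mat b c"
  shows "spec_norm (A * B) \<le> spec_norm A * spec_norm B"
proof (rule spec_norm_leI[of _ a c])
  fix x :: "real vec" assume x: "x \<in> carrier_vec c"
  have "vnorm ((A * B) *\<^sub>v x) \<le> spec_norm A * vnorm (B *\<^sub>v x)"
    using A B x by (simp add: vnorm_mult_mat_vec_le)
  also have "\<dots> \<le> spec_norm A * (spec_norm B * vnorm x)"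
    using B x by (intro mult_left_mono vnorm_mult_mat_vec_le spec_norm_nonneg)
  finally show "vnorm ((A * B) *\<^sub>v x) \<le> spec_norm A * spec_norm B * vnorm x"
    by (simp add: ac_simps)
qed (use A B in \<open>auto simp: spec_norm_nonneg\<close>)

lemma spec_norm_transpose_mult_comm:
  fixes X Y :: "real mat"
  assumes "X \<in> carrier_mat n k" "Y \<in> carrier_mat n l"
  shows "spec_norm (transpose_mat X * Y) = spec_norm (transpose_mat Y * X)"
  using assms spec_norm_transpose[of "transpose_mat X * Y"] by (simp add: transpose_mult[of _ k n])

lemma spec_norm_orthonormal_le_1:
  fixes Q :: "real mat"
  assumes "Q \<in> carrier_mat a r" "transpose_mat Q * Q = 1\<^sub>m r"
  shows "spec_norm Q \<le> 1"
  by (rule spec_norm_leI[OF assms(1)]) (use orthonormal_vnorm[OF assms] in auto)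

lemma spec_norm_mult_orthonormal_le:
  fixes M Q :: "real mat"
  assumes M: "M \<in> carrier_mat a b" and Q: "Q \<in> carrier_mat b r" "transpose_mat Q * Q = 1\<^sub>m r"
  shows "spec_norm (M * Q) \<le> spec_norm M"
proof -
  have "spec_norm (M * Q) \<le> spec_norm M * spec_norm Q"
    by (rule spec_norm_mult_le[OF M Q(1)])
  also have "\<dots> \<le> spec_norm M * 1"
    by (intro mult_left_mono spec_norm_orthonormal_le_1[OF Q] spec_norm_nonneg)
  finally show ?thesis by simp
qed

lemma spec_norm_transpose_mult_orthonormal_le:
  fixes M Q :: "real mat"
  assumes M: "M \<in> carrier_mat b a" and Q: "Q \<in> carrier_mat b r" "transpose_mat Q * Q = 1\<^sub>m r"
  shows "spec_norm (transpose_mat Q * M) \<le> spec_norm M"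
proof -
  have "transpose_mat Q * M = transpose_mat (transpose_mat M * Q)"
    using M Q by (simp add: transpose_mult[of _ a b])
  then show ?thesis
    using spec_norm_mult_orthonormal_le[of "transpose_mat M" a b Q] M Q
    by (simp add: spec_norm_transpose)
qed

lemma dim_mat_diag [simp]: "dim_row (mat_diag n f) = n" "dim_col (mat_diag n f) = n"
  by (simp_all add: mat_diag_def)

lemma transpose_mat_diag [simp]: "transpose_mat (mat_diag n f) = mat_diag n f"
  by (intro eq_matI) (auto simp: mat_diag_def)

lemma vnorm_mat_diag_mult_power2:
  assumes x: "x \<in> carrier_vec r"
  shows "(vnorm (mat_diag r f *\<^sub>v x))\<^sup>2 = (\<Sum>j<r. (f j)\<^sup>2 * (x $ j)\<^sup>2)"
proof -
  have entry: "(mat_diag r f *\<^sub>v x) $ j = f j * x $ j" if "j < r" for j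
  proof -
    have "(mat_diag r f *\<^sub>v x) $ j = (\<Sum>i\<in>{0..<r}. (if j = i then f i else 0) * x $ i)"
      using x that by (simp add: mat_diag_def scalar_prod_def)
    also have "\<dots> = (\<Sum>i\<in>{0..<r}. if j = i then f i * x $ i else 0)"
      by (intro sum.cong) auto
    finally show ?thesis using that by simp
  qed
  have "(vnorm (mat_diag r f *\<^sub>v x))\<^sup>2 = (\<Sum>j<r. ((mat_diag r f *\<^sub>v x) $ j)\<^sup>2)"
    using x by (intro vnorm_power2_sum mult_mat_vec_carrier[OF mat_diag_dim])
  also have "\<dots> = (\<Sum>j<r. (f j)\<^sup>2 * (x $ j)\<^sup>2)"
    by (intro sum.cong refl) (simp del: index_mult_mat_vec add: entry power_mult_distrib)
  finally show ?thesis .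
qed

lemma spec_norm_mat_diag_le:
  assumes "0 \<le> c" and bound: "\<And>j. j < r \<Longrightarrow> \<bar>f j\<bar> \<le> c"
  shows "spec_norm (mat_diag r f) \<le> c"
proof (rule spec_norm_leI[OF mat_diag_dim \<open>0 \<le> c\<close>])
  fix x :: "real vec" assume x: "x \<in> carrier_vec r"
  have "(vnorm (mat_diag r f *\<^sub>v x))\<^sup>2 = (\<Sum>j<r. (f j)\<^sup>2 * (x $ j)\<^sup>2)"
    by (rule vnorm_mat_diag_mult_power2[OF x])
  also have "\<dots> \<le> (\<Sum>j<r. c\<^sup>2 * (x $ j)\<^sup>2)"
  proof (rule sum_mono)
    fix j assume "j \<in> {..<r}"
    then have "\<bar>f j\<bar>\<^sup>2 \<le> c\<^sup>2" using bound by (intro power_mono) auto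
    then show "(f j)\<^sup>2 * (x $ j)\<^sup>2 \<le> c\<^sup>2 * (x $ j)\<^sup>2" by (simp add: mult_right_mono)
  qed
  also have "\<dots> = (c * vnorm x)\<^sup>2"
    by (simp add: power_mult_distrib vnorm_power2_sum[OF x] sum_distrib_left)
  finally show "vnorm (mat_diag r f *\<^sub>v x) \<le> c * vnorm x"
    by (rule power2_le_imp_le) (simp add: \<open>0 \<le> c\<close> vnorm_nonneg)
qed

lemma vnorm_mat_diag_mult_ge:
  assumes x: "x \<in> carrier_vec r" and "0 \<le> c" and bound: "\<And>j. j < r \<Longrightarrow> c \<le> f j"
  shows "c * vnorm x \<le> vnorm (mat_diag r f *\<^sub>v x)"
proof -
  have "(c * vnorm x)\<^sup>2 = (\<Sum>j<r. c\<^sup>2 * (x $ j)\<^sup>2)"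
    by (simp add: power_mult_distrib vnorm_power2_sum[OF x] sum_distrib_left)
  also have "\<dots> \<le> (\<Sum>j<r. (f j)\<^sup>2 * (x $ j)\<^sup>2)"
  proof (rule sum_mono)
    fix j assume "j \<in> {..<r}"
    then have "c\<^sup>2 \<le> (f j)\<^sup>2" using bound \<open>0 \<le> c\<close> by (intro power_mono) auto
    then show "c\<^sup>2 * (x $ j)\<^sup>2 \<le> (f j)\<^sup>2 * (x $ j)\<^sup>2" by (simp add: mult_right_mono)
  qed
  also have "\<dots> = (vnorm (mat_diag r f *\<^sub>v x))\<^sup>2"
    by (rule vnorm_mat_diag_mult_power2[OF x, symmetric])
  finally show ?thesis
    by (rule power2_le_imp_le) (simp add: vnorm_nonneg)
qed

section \<open>Spectral theorem for real symmetric matrices\<close>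

lemma orthonormal_cols_iff:
  fixes Q :: "real mat"
  assumes "Q \<in> carrier_mat n k"
  shows "transpose_mat Q * Q = 1\<^sub>m k \<longleftrightarrow>
    (\<forall>i<k. \<forall>j<k. col Q i \<bullet> col Q j = (if i = j then 1 else 0))"
proof -
  have "(transpose_mat Q * Q) $$ (i,j) = col Q i \<bullet> col Q j" if "i < k" "j < k" for i j
    using assms that by simp
  then show ?thesis
    unfolding mat_eq_iff using assms by auto
qed

lemma orthonormal_col_vnorm:
  fixes Q :: "real mat"
  assumes "Q \<in> carrier_mat n k" "transpose_mat Q * Q = 1\<^sub>m k" "j < k"
  shows "vnorm (col Q j) = 1"
  using assms orthonormal_cols_iff[OF assms(1)] by (simp add: vnorm_eq_sqrt_scalar_prod)

lemma exists_unit_vec_orthogonal_to_cols: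
  fixes Q :: "real mat"
  assumes Q: "Q \<in> carrier_mat n k" and "k < n"
  shows "\<exists>w. w \<in> carrier_vec n \<and> vnorm w = 1 \<and> transpose_mat Q *\<^sub>v w = 0\<^sub>v k"
proof -
  define Z where "Z = mat\<^sub>r n n (\<lambda>i. if i = n - 1 then 0\<^sub>v n else if i < k then col Q i else 0\<^sub>v n)"
  have Z: "Z \<in> carrier_mat n n" by (simp add: Z_def)
  have "det Z = 0"
    unfolding Z_def using assms by (intro det_row_0) auto
  then obtain v where v: "v \<in> carrier_vec n" "v \<noteq> 0\<^sub>v n" "Z *\<^sub>v v = 0\<^sub>v n"
    using det_0_iff_vec_prod_zero_field[OF Z] by auto
  have v_pos: "0 < vnorm v"
    using vnorm_eq_0_iff[OF v(1)] vnorm_nonneg[of v] v(2) by linarith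
  have "transpose_mat Q *\<^sub>v v = 0\<^sub>v k"
  proof (rule eq_vecI)
    fix i assume "i < dim_vec (0\<^sub>v k :: real vec)"
    then have "i < k" "i \<noteq> n - 1" using assms by auto
    then have "(transpose_mat Q *\<^sub>v v) $ i = (Z *\<^sub>v v) $ i"
      using assms by (simp add: Z_def)
    then show "(transpose_mat Q *\<^sub>v v) $ i = 0\<^sub>v k $ i"
      using v(3) \<open>i < k\<close> assms by simp
  qed (use Q in simp)
  moreover have "(1 / vnorm v) \<cdot>\<^sub>v 0\<^sub>v k = (0\<^sub>v k :: real vec)"
    by (intro eq_vecI) auto
  ultimately show ?thesis
    using Q v v_pos
    by (intro exI[of _ "(1 / vnorm v) \<cdot>\<^sub>v v"]) (simp add: vnorm_smult mult_mat_vec)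
qed

lemma orthonormal_extension:
  fixes Q :: "real mat"
  assumes "Q \<in> carrier_mat n k" "transpose_mat Q * Q = 1\<^sub>m k" "k \<le> n"
  shows "\<exists>W. W \<in> carrier_mat n n \<and> transpose_mat W * W = 1\<^sub>m n \<and> (\<forall>j<k. col W j = col Q j)"
  using assms
proof (induction "n - k" arbitrary: k Q)
  case 0
  then show ?case by auto
next
  case (Suc d)
  then have "k < n" by simp
  then obtain w where w: "w \<in> carrier_vec n" "vnorm w = 1" "transpose_mat Q *\<^sub>v w = 0\<^sub>v k"
    using exists_unit_vec_orthogonal_to_cols[OF Suc.prems(1)] by blast
  define Q' where "Q' = mat_of_cols n (cols Q @ [w])"
  have Q': "Q' \<in> carrier_mat n (Suc k)"
    using Suc.prems mat_of_cols_carrier(1)[of n "cols Q @ [w]"] by (simp add: Q'_def)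
  have col_Q': "col Q' j = (if j < k then col Q j else w)" if "j < Suc k" for j
  proof -
    have "(cols Q @ [w]) ! j \<in> carrier_vec n"
      using that Suc.prems(1) w(1) by (auto simp: nth_append)
    then show ?thesis
      unfolding Q'_def using that Suc.prems(1) by (simp add: nth_append)
  qed
  have Q_orth: "col Q i \<bullet> col Q j = (if i = j then 1 else 0)" if "i < k" "j < k" for i j
    using Suc.prems(1,2) that orthonormal_cols_iff by blast
  have Q_w: "col Q i \<bullet> w = 0" "w \<bullet> col Q i = 0" if "i < k" for i
  proof -
    have "(transpose_mat Q *\<^sub>v w) $ i = col Q i \<bullet> w"
      using Suc.prems(1) that by simp
    then show "col Q i \<bullet> w = 0" using w(3) that by simp
    then show "w \<bullet> col Q i = 0"
      using Suc.prems(1) that w(1) by (simp add: comm_scalar_prod[of w n])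
  qed
  have w_w: "w \<bullet> w = 1" using w(2) by (simp flip: vnorm_power2)
  have "col Q' i \<bullet> col Q' j = (if i = j then 1 else 0)" if "i < Suc k" "j < Suc k" for i j
    using that by (cases "i < k"; cases "j < k") (auto simp: col_Q' Q_orth Q_w w_w)
  then have "transpose_mat Q' * Q' = 1\<^sub>m (Suc k)"
    unfolding orthonormal_cols_iff[OF Q'] by blast
  then obtain W where "W \<in> carrier_mat n n" "transpose_mat W * W = 1\<^sub>m n" "\<forall>j<Suc k. col W j = col Q' j"
    using Suc.hyps(1)[of "Suc k" Q'] Suc.hyps(2) Q' by force
  then show ?case by (auto simp: col_Q')
qed

lemma col_mult_mat_diag:
  fixes A :: "'a :: comm_semiring_0 mat"
  assumes "A \<in> carrier_mat n k" "j < k"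
  shows "col (A * mat_diag k f) j = f j \<cdot>\<^sub>v col A j"
  using assms by (intro eq_vecI) (auto simp: mat_diag_mult_right mult.commute)

lemma mat_diag_decomposition_eigenvector:
  fixes Q :: "real mat"
  assumes Q: "Q \<in> carrier_mat n n" "transpose_mat Q * Q = 1\<^sub>m n" and j: "j < n"
  shows "(Q * mat_diag n d * transpose_mat Q) *\<^sub>v col Q j = d j \<cdot>\<^sub>v col Q j"
proof -
  have QD: "Q * mat_diag n d \<in> carrier_mat n n" using Q by simp
  have "(Q * mat_diag n d * transpose_mat Q) * Q = (Q * mat_diag n d) * (transpose_mat Q * Q)"
    using Q QD by (subst assoc_mult_mat[of _ n n _ n _ n]) auto
  also have "\<dots> = Q * mat_diag n d" unfolding Q(2) by (rule right_mult_one_mat[OF QD])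
  finally have QDQ: "(Q * mat_diag n d * transpose_mat Q) * Q = Q * mat_diag n d" .
  have "(Q * mat_diag n d * transpose_mat Q) *\<^sub>v col Q j = col ((Q * mat_diag n d * transpose_mat Q) * Q) j"
    by (rule col_mult2[symmetric]) (use Q j in auto)
  then show ?thesis using Q j by (simp only: QDQ col_mult_mat_diag)
qed

lemma mat_diag_decomposition_eigenvalue:
  fixes Q :: "real mat"
  assumes Q: "Q \<in> carrier_mat n n" "transpose_mat Q * Q = 1\<^sub>m n" and j: "j < n"
  shows "eigenvalue (Q * mat_diag n d * transpose_mat Q) (d j)"
proof -
  have "col Q j \<noteq> 0\<^sub>v n"
    using orthonormal_col_vnorm[OF Q j] Q by (auto simp: vnorm_def)
  then show ?thesis
    using mat_diag_decomposition_eigenvector[OF Q j] col_carrier_vec[OF j Q(1)] Q(1)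
    unfolding eigenvalue_def eigenvector_def by (intro exI[of _ "col Q j"]) simp
qed

lemma orthogonal_mult:
  fixes W B :: "real mat"
  assumes W: "W \<in> carrier_mat n n" "transpose_mat W * W = 1\<^sub>m n"
    and B: "B \<in> carrier_mat n n" "transpose_mat B * B = 1\<^sub>m n" and X: "X \<in> carrier_mat n n"
  shows "transpose_mat (W * B) * (W * B) = 1\<^sub>m n"
    "W * (B * X * transpose_mat B) * transpose_mat W = (W * B) * X * transpose_mat (W * B)"
proof -
  have square: "\<And>Y Z. Y \<in> carrier_mat n n \<Longrightarrow> Z \<in> carrier_mat n n \<Longrightarrow> Y * Z \<in> carrier_mat n n"
    by (rule mult_carrier_mat)
  have "transpose_mat (W * B) * (W * B) = transpose_mat B * (transpose_mat W * W) * B"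
    using W(1) B(1) by (simp add: transpose_mult[of W n n B n] assoc_mult_mat[of _ n n _ n _ n])
  then show "transpose_mat (W * B) * (W * B) = 1\<^sub>m n"
    using W(2) B(1,2) by simp
  show "W * (B * X * transpose_mat B) * transpose_mat W = (W * B) * X * transpose_mat (W * B)"
    using W(1) B(1) X
    by (simp add: transpose_mult[of W n n B n] assoc_mult_mat[of _ n n _ n _ n] square)
qed

lemma complex_eigenvalue_of_real_symmetric_is_real:
  fixes S :: "real mat" and v :: "complex vec"
  assumes S: "S \<in> carrier_mat n n" "transpose_mat S = S"
    and v: "v \<in> carrier_vec n" "v \<noteq> 0\<^sub>v n" "map_mat complex_of_real S *\<^sub>v v = a \<cdot>\<^sub>v v"
  shows "a \<in> \<real>"
proof -
  have S_sym: "S $$ (i,j) = S $$ (j,i)" if "i < n" "j < n" for i j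
    using S that by (metis carrier_matD index_transpose_mat(1))
  have row: "(\<Sum>j<n. of_real (S $$ (i,j)) * v $ j) = a * v $ i" if "i < n" for i
  proof -
    have "(\<Sum>j<n. of_real (S $$ (i,j)) * v $ j) = (map_mat complex_of_real S *\<^sub>v v) $ i"
      using S v(1) that by (simp add: scalar_prod_def atLeast0LessThan)
    also have "\<dots> = a * v $ i" using v that by (simp only: v(3)) simp
    finally show ?thesis .
  qed
  define N where "N = (\<Sum>i<n. (cmod (v $ i))\<^sup>2)"
  \<comment> \<open>the Hermitian form \<open>v\<^sup>H S v\<close> equals \<open>a N\<close> and its own conjugate\<close>
  define q where "q = (\<Sum>i<n. \<Sum>j<n. cnj (v $ i) * of_real (S $$ (i,j)) * v $ j)"
  have "q = (\<Sum>i<n. a * (v $ i * cnj (v $ i)))"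
    unfolding q_def by (intro sum.cong refl) (simp add: mult.assoc row flip: sum_distrib_left)
  moreover have "of_real N = (\<Sum>i<n. v $ i * cnj (v $ i))"
    unfolding N_def of_real_sum by (simp only: complex_norm_square)
  ultimately have q_eq: "q = a * of_real N"
    by (simp add: sum_distrib_left)
  have "cnj q = (\<Sum>i<n. \<Sum>j<n. v $ i * of_real (S $$ (i,j)) * cnj (v $ j))"
    unfolding q_def by simp
  also have "\<dots> = (\<Sum>j<n. \<Sum>i<n. v $ i * of_real (S $$ (i,j)) * cnj (v $ j))"
    by (rule sum.swap)
  also have "\<dots> = q"
    unfolding q_def by (intro sum.cong refl) (simp add: S_sym mult_ac)
  finally have "cnj a * of_real N = a * of_real N"
    using q_eq by simp
  moreover have "0 < N"
  proof -
    obtain i where i: "i < n" "v $ i \<noteq> 0" using v(1,2) by (auto simp: vec_eq_iff)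
    have "(cmod (v $ i))\<^sup>2 \<le> N" unfolding N_def using i by (intro member_le_sum) auto
    moreover have "0 < (cmod (v $ i))\<^sup>2" using i by simp
    ultimately show ?thesis by linarith
  qed
  ultimately show ?thesis by (simp add: Reals_cnj_iff)
qed

lemma real_symmetric_has_eigenvector:
  fixes S :: "real mat"
  assumes S: "S \<in> carrier_mat n n" "transpose_mat S = S" and "0 < n"
  shows "\<exists>e v. v \<in> carrier_vec n \<and> v \<noteq> 0\<^sub>v n \<and> S *\<^sub>v v = e \<cdot>\<^sub>v v"
proof -
  let ?Sc = "map_mat complex_of_real S"
  obtain a where "a \<in> spectrum ?Sc" using spectrum_non_empty[of ?Sc n] S assms(3) by auto
  then obtain v where v: "v \<in> carrier_vec n" "v \<noteq> 0\<^sub>v n" "?Sc *\<^sub>v v = a \<cdot>\<^sub>v v"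
    using S unfolding spectrum_def eigenvalue_def eigenvector_def by auto
  obtain e where a: "a = of_real e"
    using complex_eigenvalue_of_real_symmetric_is_real[OF S v] by (auto elim: Reals_cases)
  have row: "(\<Sum>j<n. of_real (S $$ (i,j)) * v $ j) = of_real e * v $ i" if "i < n" for i
  proof -
    have "(\<Sum>j<n. of_real (S $$ (i,j)) * v $ j) = (?Sc *\<^sub>v v) $ i"
      using S v(1) that by (simp add: scalar_prod_def atLeast0LessThan)
    also have "\<dots> = of_real e * v $ i" using v that a by (simp only: v(3)) simp
    finally show ?thesis .
  qed
  have real_part: "S *\<^sub>v map_vec f v = e \<cdot>\<^sub>v map_vec f v" if f: "f = Re \<or> f = Im" for f
  proof (rule eq_vecI)
    fix i assume "i < dim_vec (e \<cdot>\<^sub>v map_vec f v)"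
    then have i: "i < n" using v by simp
    have "f (\<Sum>j<n. of_real (S $$ (i,j)) * v $ j) = (\<Sum>j<n. S $$ (i,j) * f (v $ j))"
      "f (of_real e * v $ i) = e * f (v $ i)"
      using f by (elim disjE; simp add: Re_sum Im_sum)+
    then show "(S *\<^sub>v map_vec f v) $ i = (e \<cdot>\<^sub>v map_vec f v) $ i"
      using S v i row[OF i] by (simp add: scalar_prod_def atLeast0LessThan)
  qed (use S v in auto)
  have "map_vec Re v \<noteq> 0\<^sub>v n \<or> map_vec Im v \<noteq> 0\<^sub>v n"
    using v(1,2) by (auto simp: vec_eq_iff complex_eq_iff)
  then show ?thesis
    using real_part v(1) by (metis map_carrier_vec)
qed

lemma real_symmetric_max_eigenvector:
  fixes S :: "real mat"
  assumes S: "S \<in> carrier_mat n n" "transpose_mat S = S" and "0 < n"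
  obtains lam v where "v \<in> carrier_vec n" "vnorm v = 1" "S *\<^sub>v v = lam \<cdot>\<^sub>v v"
    "\<And>e. eigenvalue S e \<Longrightarrow> e \<le> lam"
proof -
  have fin: "finite (Collect (eigenvalue S))"
    using card_finite_spectrum(1)[OF S(1)] unfolding spectrum_def .
  obtain e0 v0 where "v0 \<in> carrier_vec n" "v0 \<noteq> 0\<^sub>v n" "S *\<^sub>v v0 = e0 \<cdot>\<^sub>v v0"
    using real_symmetric_has_eigenvector[OF assms] by blast
  then have "eigenvalue S e0"
    using S unfolding eigenvalue_def eigenvector_def by auto
  define lam where "lam = Max (Collect (eigenvalue S))"
  have "eigenvalue S lam"
    unfolding lam_def using fin \<open>eigenvalue S e0\<close> by (metis Max_in empty_iff mem_Collect_eq)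
  then obtain u where u: "u \<in> carrier_vec n" "u \<noteq> 0\<^sub>v n" "S *\<^sub>v u = lam \<cdot>\<^sub>v u"
    using S unfolding eigenvalue_def eigenvector_def by auto
  have u_pos: "0 < vnorm u"
    using vnorm_eq_0_iff[OF u(1)] vnorm_nonneg[of u] u(2) by linarith
  show ?thesis
  proof (rule that[of "(1 / vnorm u) \<cdot>\<^sub>v u" lam])
    show "S *\<^sub>v ((1 / vnorm u) \<cdot>\<^sub>v u) = lam \<cdot>\<^sub>v ((1 / vnorm u) \<cdot>\<^sub>v u)"
      using S u by (simp add: mult_mat_vec smult_smult_assoc mult.commute)
    show "e \<le> lam" if "eigenvalue S e" for e
      unfolding lam_def using fin that by simp
  qed (use u u_pos in \<open>auto simp: vnorm_smult\<close>)
qed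


lemma symmetric_deflation:
  fixes S :: "real mat"
  assumes S: "S \<in> carrier_mat (Suc n) (Suc n)" "transpose_mat S = S"
    and v: "v \<in> carrier_vec (Suc n)" "vnorm v = 1" "S *\<^sub>v v = lam \<cdot>\<^sub>v v"
  obtains W S' where "W \<in> carrier_mat (Suc n) (Suc n)" "transpose_mat W * W = 1\<^sub>m (Suc n)"
    "S' \<in> carrier_mat n n" "transpose_mat S' = S'"
    "S = W * four_block_mat (mat_diag 1 (\<lambda>_. lam)) (0\<^sub>m 1 n) (0\<^sub>m n 1) S' * transpose_mat W"
proof -
  let ?N = "Suc n"
  have v_col: "mat_of_cols ?N [v] \<in> carrier_mat ?N 1" "col (mat_of_cols ?N [v]) 0 = v"
    using v(1) mat_of_cols_carrier(1)[of ?N "[v]"] by auto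
  have "transpose_mat (mat_of_cols ?N [v]) * mat_of_cols ?N [v] = 1\<^sub>m 1"
    unfolding orthonormal_cols_iff[OF v_col(1)] using v_col(2) v(2)
    by (simp flip: vnorm_power2)
  then obtain W where W: "W \<in> carrier_mat ?N ?N" "transpose_mat W * W = 1\<^sub>m ?N"
    and W0: "col W 0 = v"
    using orthonormal_extension[OF v_col(1)] v_col(2) by fastforce
  have WWT: "W * transpose_mat W = 1\<^sub>m ?N" by (rule orthogonal_mult_transpose[OF W])
  define T where "T = transpose_mat W * S * W"
  have T: "T \<in> carrier_mat ?N ?N" using W S by (simp add: T_def)
  have "transpose_mat T = transpose_mat W * transpose_mat (transpose_mat W * S)"
    unfolding T_def by (rule transpose_mult) (use W S in auto)
  also have "\<dots> = transpose_mat W * (S * W)"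
    using W S transpose_mult[of "transpose_mat W" ?N ?N S ?N] by simp
  finally have T_sym: "transpose_mat T = T"
    using W S by (simp add: T_def assoc_mult_mat[of _ ?N ?N _ ?N _ ?N])
  have "col T 0 = transpose_mat W *\<^sub>v (S *\<^sub>v col W 0)"
    using W S by (simp add: T_def col_mult2[of _ ?N ?N _ ?N] del: col_mult)
  also have "\<dots> = lam \<cdot>\<^sub>v (transpose_mat W *\<^sub>v col W 0)"
    using W v by (simp add: W0 mult_mat_vec)
  also have "transpose_mat W *\<^sub>v col W 0 = col (transpose_mat W * W) 0"
    using W(1) by (simp add: col_mult2[of _ ?N ?N _ ?N] del: col_mult)
  finally have T_col0: "col T 0 = lam \<cdot>\<^sub>v unit_vec ?N 0"
    using W(2) by simp
  have T_0: "T $$ (i, 0) = (if i = 0 then lam else 0)" "T $$ (0, i) = (if i = 0 then lam else 0)"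
    if "i < ?N" for i
  proof -
    show "T $$ (i, 0) = (if i = 0 then lam else 0)"
      using arg_cong[OF T_col0, of "\<lambda>u. u $ i"] T that by auto
    then show "T $$ (0, i) = (if i = 0 then lam else 0)"
      using arg_cong[OF T_sym, of "\<lambda>A. A $$ (i, 0)"] T that by simp
  qed
  define S' where "S' = mat n n (\<lambda>(i,j). T $$ (Suc i, Suc j))"
  have S'_carrier: "S' \<in> carrier_mat n n" by (simp add: S'_def)
  have S'_sym: "transpose_mat S' = S'"
    using T_sym T by (auto simp: S'_def mat_eq_iff)
  have T_block: "T = four_block_mat (mat_diag 1 (\<lambda>_. lam)) (0\<^sub>m 1 n) (0\<^sub>m n 1) S'"
    using T T_0 by (intro eq_matI) (auto simp: S'_def mat_diag_def)
  have "W * T * transpose_mat W = (W * transpose_mat W) * S * (W * transpose_mat W)"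
    using W S by (simp add: T_def assoc_mult_mat[of _ ?N ?N _ ?N _ ?N])
  then have "S = W * T * transpose_mat W"
    using S(1) by (simp only: WWT left_mult_one_mat right_mult_one_mat)
  then show ?thesis
    unfolding T_block by (rule that[OF W S'_carrier S'_sym])
qed


lemma four_block_spectral_decomposition:
  fixes Q :: "real mat"
  assumes Q: "Q \<in> carrier_mat n n" "transpose_mat Q * Q = 1\<^sub>m n"
  defines "B \<equiv> four_block_mat (1\<^sub>m 1) (0\<^sub>m 1 n) (0\<^sub>m n 1) Q"
  shows "B \<in> carrier_mat (Suc n) (Suc n)" "transpose_mat B * B = 1\<^sub>m (Suc n)"
    and "four_block_mat (mat_diag 1 (\<lambda>_. lam)) (0\<^sub>m 1 n) (0\<^sub>m n 1) (Q * mat_diag n d * transpose_mat Q)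
      = B * mat_diag (Suc n) (\<lambda>i. if i = 0 then lam else d (i - 1)) * transpose_mat B"
proof -
  show "B \<in> carrier_mat (Suc n) (Suc n)"
    using four_block_carrier_mat[of "1\<^sub>m 1" 1 1 Q n n] Q by (simp add: B_def)
  have BT: "transpose_mat B = four_block_mat (1\<^sub>m 1) (0\<^sub>m 1 n) (0\<^sub>m n 1) (transpose_mat Q)"
    using Q by (simp add: B_def transpose_four_block_mat[of _ 1 1 _ n _ n])
  show "transpose_mat B * B = 1\<^sub>m (Suc n)"
    unfolding BT unfolding B_def using Q
    by (simp add: mult_four_block_mat[of _ 1 1 _ n _ n _ _ 1 _ n])
  have D: "mat_diag (Suc n) (\<lambda>i. if i = 0 then lam else d (i - 1))
      = four_block_mat (mat_diag 1 (\<lambda>_. lam)) (0\<^sub>m 1 n) (0\<^sub>m n 1) (mat_diag n d)"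
    by (intro eq_matI) (auto simp: mat_diag_def)
  have "B * mat_diag (Suc n) (\<lambda>i. if i = 0 then lam else d (i - 1))
      = four_block_mat (mat_diag 1 (\<lambda>_. lam)) (0\<^sub>m 1 n) (0\<^sub>m n 1) (Q * mat_diag n d)"
    unfolding D B_def using Q
    by (simp add: mult_four_block_mat[of _ 1 1 _ n _ n _ _ 1 _ n] carrier_matD[OF mat_diag_dim])
  moreover have QDQ: "Q * mat_diag n d * transpose_mat Q \<in> carrier_mat n n"
    using Q by (meson mat_diag_dim mult_carrier_mat transpose_carrier_mat)
  ultimately show "four_block_mat (mat_diag 1 (\<lambda>_. lam)) (0\<^sub>m 1 n) (0\<^sub>m n 1) (Q * mat_diag n d * transpose_mat Q)
      = B * mat_diag (Suc n) (\<lambda>i. if i = 0 then lam else d (i - 1)) * transpose_mat B"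
    unfolding BT using Q
    by (simp add: mult_four_block_mat[of _ 1 1 _ n _ n _ _ 1 _ n] carrier_matD[OF mat_diag_dim]
        left_add_zero_mat[OF QDQ])
qed


theorem real_symmetric_sorted_spectral_decomposition:
  fixes S :: "real mat"
  assumes "S \<in> carrier_mat n n" "transpose_mat S = S"
  shows "\<exists>Q d. Q \<in> carrier_mat n n \<and> transpose_mat Q * Q = 1\<^sub>m n \<and>
    S = Q * mat_diag n d * transpose_mat Q \<and> (\<forall>i j. i \<le> j \<longrightarrow> j < n \<longrightarrow> d j \<le> d i)"
  using assms
proof (induction n arbitrary: S)
  case 0
  then have "S = 1\<^sub>m 0 * mat_diag 0 (\<lambda>_. 0) * transpose_mat (1\<^sub>m 0)"
    by (intro eq_matI) auto
  then show ?case by fastforce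
next
  case (Suc n)
  let ?N = "Suc n"
  obtain lam v where v: "v \<in> carrier_vec ?N" "vnorm v = 1" "S *\<^sub>v v = lam \<cdot>\<^sub>v v"
    and lam_max: "\<And>e. eigenvalue S e \<Longrightarrow> e \<le> lam"
    using real_symmetric_max_eigenvector[OF Suc.prems] by blast
  obtain W S' where W: "W \<in> carrier_mat ?N ?N" "transpose_mat W * W = 1\<^sub>m ?N"
    and S': "S' \<in> carrier_mat n n" "transpose_mat S' = S'"
    and S_W: "S = W * four_block_mat (mat_diag 1 (\<lambda>_. lam)) (0\<^sub>m 1 n) (0\<^sub>m n 1) S' * transpose_mat W"
    using symmetric_deflation[OF Suc.prems v] by blast
  obtain Q' d' where Q': "Q' \<in> carrier_mat n n" "transpose_mat Q' * Q' = 1\<^sub>m n"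
    and S'_Q': "S' = Q' * mat_diag n d' * transpose_mat Q'"
    and d'_sorted: "\<And>i j. i \<le> j \<Longrightarrow> j < n \<Longrightarrow> d' j \<le> d' i"
    using Suc.IH[OF S'] by blast
  define B where "B = four_block_mat (1\<^sub>m 1) (0\<^sub>m 1 n) (0\<^sub>m n 1) Q'"
  define d where "d = (\<lambda>i. if i = 0 then lam else d' (i - 1))"
  note B = four_block_spectral_decomposition[OF Q', folded B_def]
  define Q where "Q = W * B"
  have Q: "Q \<in> carrier_mat ?N ?N" using W B by (simp add: Q_def)
  note Q_orth = orthogonal_mult(1)[OF W B(1,2) mat_diag_dim, folded Q_def]
  have S_Q: "S = Q * mat_diag ?N d * transpose_mat Q"
    using S_W B(3)[of lam d', folded d_def] S'_Q' orthogonal_mult(2)[OF W B(1,2) mat_diag_dim, of d]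
    by (simp add: Q_def)
  \<comment> \<open>every \<open>d j\<close> is an eigenvalue of \<open>S\<close>, and \<open>d 0 = lam\<close> is the largest one\<close>
  have "d j \<le> d i" if "i \<le> j" "j < ?N" for i j
  proof (cases "i = 0")
    case True
    then show ?thesis
      using lam_max mat_diag_decomposition_eigenvalue[OF Q Q_orth \<open>j < ?N\<close>, of d] S_Q
      by (simp add: d_def)
  next
    case False
    then show ?thesis using that d'_sorted[of "i - 1" "j - 1"] by (simp add: d_def)
  qed
  then show ?case using Q Q_orth S_Q by blast
qed

section \<open>Singular value decomposition\<close>

lemma gram_mat_diag_nonneg:
  fixes P :: "real mat"
  assumes P: "P \<in> carrier_mat n r" and PP: "transpose_mat P * P = mat_diag r d" and i: "i < r"
  shows "0 \<le> d i"
proof -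
  have "col P i \<bullet> col P i = d i"
    using arg_cong[OF PP, of "\<lambda>A. A $$ (i, i)"] P i by (simp add: mat_diag_def)
  then show ?thesis using scalar_prod_self_nonneg by metis
qed

lemma orthogonal_factor_of_orthogonal_cols:
  fixes P :: "real mat"
  assumes P: "P \<in> carrier_mat r r" and PP: "transpose_mat P * P = mat_diag r d"
    and d_sorted: "\<And>i j. i \<le> j \<Longrightarrow> j < r \<Longrightarrow> d j \<le> d i"
  shows "\<exists>U. U \<in> carrier_mat r r \<and> transpose_mat U * U = 1\<^sub>m r \<and> P = U * mat_diag r (\<lambda>i. sqrt (d i))"
proof -
  have P_orth: "col P i \<bullet> col P j = (if i = j then d i else 0)" if "i < r" "j < r" for i j
    using arg_cong[OF PP, of "\<lambda>A. A $$ (i, j)"] P that by (simp add: mat_diag_def)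
  \<comment> \<open>by sortedness the columns with \<open>d i > 0\<close> come first; normalized, they extend to \<open>U\<close>\<close>
  define k where "k = (LEAST i. i = r \<or> d i \<le> 0)"
  have k_le: "k \<le> r" unfolding k_def by (rule Least_le) simp
  have d_pos: "0 < d i" if "i < k" for i
    using not_less_Least[OF that[unfolded k_def]] that k_le by auto
  have d_zero: "d i = 0" if "k \<le> i" "i < r" for i
  proof -
    have "k = r \<or> d k \<le> 0" unfolding k_def by (rule LeastI[of _ r]) simp
    then have "d i \<le> 0" using that d_sorted[of k i] by auto
    then show ?thesis using gram_mat_diag_nonneg[OF P PP \<open>i < r\<close>] by simp
  qed
  define Q where "Q = mat_of_cols r (map (\<lambda>j. (1 / sqrt (d j)) \<cdot>\<^sub>v col P j) [0..<k])"
  have Q: "Q \<in> carrier_mat r k"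
    using mat_of_cols_carrier(1)[of r "map (\<lambda>j. (1 / sqrt (d j)) \<cdot>\<^sub>v col P j) [0..<k]"]
    by (simp add: Q_def)
  have col_Q: "col Q j = (1 / sqrt (d j)) \<cdot>\<^sub>v col P j" if "j < k" for j
    unfolding Q_def using that k_le P by (subst col_mat_of_cols) auto
  have "col Q i \<bullet> col Q j = (if i = j then 1 else 0)" if "i < k" "j < k" for i j
  proof -
    have "col Q i \<bullet> col Q j = (1 / sqrt (d i)) * (1 / sqrt (d j)) * (col P i \<bullet> col P j)"
      using that k_le P by (simp add: col_Q)
    then show ?thesis
      using P_orth[of i j] that k_le d_pos[OF \<open>i < k\<close>] by auto
  qed
  then have "transpose_mat Q * Q = 1\<^sub>m k"
    unfolding orthonormal_cols_iff[OF Q] by blast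
  then obtain U where U: "U \<in> carrier_mat r r" "transpose_mat U * U = 1\<^sub>m r"
    and U_Q: "\<And>j. j < k \<Longrightarrow> col U j = col Q j"
    using orthonormal_extension[OF Q _ k_le] by blast
  have "col P j = col (U * mat_diag r (\<lambda>i. sqrt (d i))) j" if "j < r" for j
  proof (cases "j < k")
    case True
    then show ?thesis
      using U P that d_pos[OF True] by (simp add: col_mult_mat_diag U_Q col_Q smult_smult_assoc)
  next
    case False
    then have "col P j \<bullet> col P j = 0" using P_orth[OF that that] d_zero that by simp
    then have "col P j = 0\<^sub>v r"
      using vnorm_eq_0_iff[of "col P j" r] P that by (simp add: vnorm_eq_sqrt_scalar_prod)
    moreover have "d j = 0" using d_zero False that by simp
    ultimately show ?thesis
      using U that by (auto simp: col_mult_mat_diag intro!: eq_vecI)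
  qed
  then have "P = U * mat_diag r (\<lambda>i. sqrt (d i))"
    using P U by (intro mat_col_eqI) auto
  then show ?thesis using U by blast
qed


lemma is_svdD:
  fixes A :: "real mat"
  assumes "is_svd A U S V" "A \<in> carrier_mat n m"
  shows "U \<in> carrier_mat n n" "V \<in> carrier_mat m m" "S \<in> carrier_mat n m"
    "transpose_mat U * U = 1\<^sub>m n" "transpose_mat V * V = 1\<^sub>m m"
    "U * transpose_mat U = 1\<^sub>m n" "V * transpose_mat V = 1\<^sub>m m"
    "\<And>i j. i < n \<Longrightarrow> j < m \<Longrightarrow> i \<noteq> j \<Longrightarrow> S $$ (i,j) = 0"
    "\<And>i. i < min n m \<Longrightarrow> 0 \<le> S $$ (i,i)"
    "\<And>i j. i \<le> j \<Longrightarrow> j < min n m \<Longrightarrow> S $$ (j,j) \<le> S $$ (i,i)"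
    "A = U * S * transpose_mat V"
  using assms orthogonal_mult_transpose[of U n] orthogonal_mult_transpose[of V m]
  unfolding is_svd_def Let_def diagonal_mat_def by auto

lemma sval_nonneg:
  assumes "is_svd A U S V" "A \<in> carrier_mat n m"
  shows "0 \<le> sval S i"
proof -
  have "0 \<le> S $$ (i - 1, i - 1)" if "1 \<le> i" "i \<le> min n m"
  proof -
    have "i - 1 < min n m" using that by arith
    then show ?thesis by (rule is_svdD(9)[OF assms])
  qed
  then show ?thesis using is_svdD(3)[OF assms] by (simp add: sval_def)
qed

lemma svd_exists_square:
  fixes M :: "real mat"
  assumes M: "M \<in> carrier_mat r r"
  shows "\<exists>U S V. is_svd M U S V"
proof -
  have square: "\<And>X Y. X \<in> carrier_mat r r \<Longrightarrow> Y \<in> carrier_mat r r \<Longrightarrow> X * Y \<in> carrier_mat r r"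
    by (rule mult_carrier_mat)
  have G: "transpose_mat M * M \<in> carrier_mat r r"
    "transpose_mat (transpose_mat M * M) = transpose_mat M * M"
    using M by (simp_all add: transpose_mult[of _ r r M r])
  obtain Q d where Q: "Q \<in> carrier_mat r r" "transpose_mat Q * Q = 1\<^sub>m r"
    and G_Q: "transpose_mat M * M = Q * mat_diag r d * transpose_mat Q"
    and d_sorted: "\<And>i j. i \<le> j \<Longrightarrow> j < r \<Longrightarrow> d j \<le> d i"
    using real_symmetric_sorted_spectral_decomposition[OF G] by blast
  have "transpose_mat (M * Q) * (M * Q) = transpose_mat Q * (transpose_mat M * M) * Q"
    using M Q(1) by (simp add: transpose_mult[of M r r Q r] assoc_mult_mat[of _ r r _ r _ r] square)
  also have "\<dots> = (transpose_mat Q * Q) * mat_diag r d * (transpose_mat Q * Q)"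
    unfolding G_Q using Q(1) by (simp add: assoc_mult_mat[of _ r r _ r _ r] square)
  finally have PP: "transpose_mat (M * Q) * (M * Q) = mat_diag r d"
    using Q(2) by simp
  obtain U where U: "U \<in> carrier_mat r r" "transpose_mat U * U = 1\<^sub>m r"
    and MQ: "M * Q = U * mat_diag r (\<lambda>i. sqrt (d i))"
    using orthogonal_factor_of_orthogonal_cols[OF _ PP d_sorted] M Q by auto
  have "M = M * Q * transpose_mat Q"
    using M Q orthogonal_mult_transpose[OF Q] by (simp add: assoc_mult_mat[of _ r r _ r _ r])
  then have "M = U * mat_diag r (\<lambda>i. sqrt (d i)) * transpose_mat Q"
    unfolding MQ .
  moreover have "0 \<le> d i" if "i < r" for i
    using gram_mat_diag_nonneg[OF mult_carrier_mat[OF M Q(1)] PP that] .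
  ultimately have "is_svd M U (mat_diag r (\<lambda>i. sqrt (d i))) Q"
    unfolding is_svd_def Let_def using M U Q d_sorted
    by (auto simp: diagonal_mat_def mat_diag_def)
  then show ?thesis by blast
qed

lemma sing_val_eigenvector:
  fixes M :: "real mat"
  assumes M: "M \<in> carrier_mat r r" and i: "i < r"
  shows "\<exists>x. x \<in> carrier_vec r \<and> vnorm x = 1 \<and>
      (transpose_mat M * M) *\<^sub>v x = (sing_val M (Suc i))\<^sup>2 \<cdot>\<^sub>v x"
    and "\<exists>x. x \<in> carrier_vec r \<and> vnorm x = 1 \<and>
      (M * transpose_mat M) *\<^sub>v x = (sing_val M (Suc i))\<^sup>2 \<cdot>\<^sub>v x"
proof -
  have square: "\<And>X Y. X \<in> carrier_mat r r \<Longrightarrow> Y \<in> carrier_mat r r \<Longrightarrow> X * Y \<in> carrier_mat r r"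
    by (rule mult_carrier_mat)
  \<comment> \<open>\<open>sing_val\<close> reads off an SVD chosen by \<open>SOME\<close>, which is meaningful as one exists\<close>
  define S where "S = (SOME S. \<exists>U V. is_svd M U S V)"
  have "\<exists>U V. is_svd M U S V"
    unfolding S_def by (rule someI_ex) (use svd_exists_square[OF M] in blast)
  then obtain U V where svd: "is_svd M U S V" by blast
  note f = is_svdD[OF svd M]
  define s where "s j = S $$ (j, j)" for j
  have S_diag: "S = mat_diag r s"
    using f(3,8) by (intro eq_matI) (auto simp: mat_diag_def s_def)
  have sing_val: "sing_val M (Suc i) = s i"
    unfolding sing_val_def S_def[symmetric] sval_def using f(3) i by (simp add: s_def)
  have "transpose_mat M * M = V * (mat_diag r s * (transpose_mat U * U) * mat_diag r s) * transpose_mat V"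
    using f(1,2,3) unfolding f(11) S_diag
    by (simp add: transpose_mult[of _ r r _ r] assoc_mult_mat[of _ r r _ r _ r] square)
  then have "transpose_mat M * M = V * mat_diag r (\<lambda>j. (s j)\<^sup>2) * transpose_mat V"
    using f(4) by (simp add: power2_eq_square)
  then show "\<exists>x. x \<in> carrier_vec r \<and> vnorm x = 1 \<and>
      (transpose_mat M * M) *\<^sub>v x = (sing_val M (Suc i))\<^sup>2 \<cdot>\<^sub>v x"
    using mat_diag_decomposition_eigenvector[OF f(2,5) i] orthonormal_col_vnorm[OF f(2,5) i] f(2) i
    by (intro exI[of _ "col V i"]) (simp add: sing_val)
  have "M * transpose_mat M = U * (mat_diag r s * (transpose_mat V * V) * mat_diag r s) * transpose_mat U"
    using f(1,2,3) unfolding f(11) S_diag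
    by (simp add: transpose_mult[of _ r r _ r] assoc_mult_mat[of _ r r _ r _ r] square)
  then have "M * transpose_mat M = U * mat_diag r (\<lambda>j. (s j)\<^sup>2) * transpose_mat U"
    using f(5) by (simp add: power2_eq_square)
  then show "\<exists>x. x \<in> carrier_vec r \<and> vnorm x = 1 \<and>
      (M * transpose_mat M) *\<^sub>v x = (sing_val M (Suc i))\<^sup>2 \<cdot>\<^sub>v x"
    using mat_diag_decomposition_eigenvector[OF f(1,4) i] orthonormal_col_vnorm[OF f(1,4) i] f(1) i
    by (intro exI[of _ "col U i"]) (simp add: sing_val)
qed

lemma dim_lead_cols [simp]: "dim_row (lead_cols Q r) = dim_row Q" "dim_col (lead_cols Q r) = r"
  by (simp_all add: lead_cols_def)

lemma lead_cols_carrier [simp]: "Q \<in> carrier_mat n k \<Longrightarrow> lead_cols Q r \<in> carrier_mat n r"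
  by (simp add: lead_cols_def)

lemma col_lead_cols [simp]: "j < r \<Longrightarrow> j < dim_col Q \<Longrightarrow> col (lead_cols Q r) j = col Q j"
  by (intro eq_vecI) (simp_all add: lead_cols_def)

lemma lead_cols_orthonormal:
  fixes Q :: "real mat"
  assumes Q: "Q \<in> carrier_mat n k" "transpose_mat Q * Q = 1\<^sub>m k" and "r \<le> k"
  shows "transpose_mat (lead_cols Q r) * lead_cols Q r = 1\<^sub>m r"
  using Q \<open>r \<le> k\<close> unfolding orthonormal_cols_iff[OF lead_cols_carrier[OF Q(1)]] orthonormal_cols_iff[OF Q(1)]
  by auto

lemma svd_lead_cols_orthonormal:
  fixes A :: "real mat"
  assumes "is_svd A U S V" "A \<in> carrier_mat n m" "r \<le> min n m"
  shows "lead_cols U r \<in> carrier_mat n r" "transpose_mat (lead_cols U r) * lead_cols U r = 1\<^sub>m r"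
    "lead_cols V r \<in> carrier_mat m r" "transpose_mat (lead_cols V r) * lead_cols V r = 1\<^sub>m r"
  using is_svdD(1,2,4,5)[OF assms(1,2)] assms(3) by (auto intro: lead_cols_orthonormal)

lemma svd_lead_diag_vnorm_ge:
  fixes A :: "real mat"
  assumes svd: "is_svd A U S V" and A: "A \<in> carrier_mat n m" and r: "1 \<le> r" "r \<le> min n m"
    and x: "x \<in> carrier_vec r" "vnorm x = 1"
  shows "S $$ (r - 1, r - 1) \<le> vnorm (mat_diag r (\<lambda>j. S $$ (j, j)) *\<^sub>v x)"
proof -
  have last: "r - 1 < min n m" using r by arith
  have "S $$ (r - 1, r - 1) \<le> S $$ (j, j)" if "j < r" for j
    using is_svdD(10)[OF svd A _ last] that by simp
  then show ?thesis
    using vnorm_mat_diag_mult_ge[OF x(1)] is_svdD(9)[OF svd A last] x(2) by fastforce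
qed

lemma col_rect_diagonal:
  fixes S :: "real mat"
  assumes S: "S \<in> carrier_mat n m" and diag: "\<And>i j. i < n \<Longrightarrow> j < m \<Longrightarrow> i \<noteq> j \<Longrightarrow> S $$ (i,j) = 0"
    and j: "j < m"
  shows "col S j = (if j < n then S $$ (j,j) \<cdot>\<^sub>v unit_vec n j else 0\<^sub>v n)"
  using assms by (intro eq_vecI) (auto simp: unit_vec_def)

lemma is_svd_transpose:
  fixes A :: "real mat"
  assumes svd: "is_svd A U S V" and A: "A \<in> carrier_mat n m"
  shows "is_svd (transpose_mat A) V (transpose_mat S) U"
proof -
  note f = is_svdD[OF svd A]
  have "transpose_mat A = V * transpose_mat S * transpose_mat U"
    using f(1-3) unfolding f(11)
    by (simp add: transpose_mult[of _ n m _ m] transpose_mult[of _ n n _ m] assoc_mult_mat[of _ m n _ n _ n])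
  then show ?thesis
    using f A unfolding is_svd_def Let_def diagonal_mat_def by (auto simp: min.commute)
qed

lemma sval_transpose [simp]: "sval (transpose_mat S) i = sval S i"
proof -
  have diag: "transpose_mat S $$ (k,k) = S $$ (k,k)" if "k < dim_row S" "k < dim_col S" for k
    using that by simp
  show ?thesis
    unfolding sval_def using diag[of "i - 1"] by (auto simp: min.commute)
qed

lemma svd_mult_lead_cols:
  fixes A :: "real mat"
  assumes svd: "is_svd A U S V" and A: "A \<in> carrier_mat n m" and r: "r \<le> min n m"
  shows "A * lead_cols V r = lead_cols U r * mat_diag r (\<lambda>j. S $$ (j,j))"
proof (rule mat_col_eqI)
  note f = is_svdD[OF svd A]
  fix j assume "j < dim_col (lead_cols U r * mat_diag r (\<lambda>j. S $$ (j,j)))"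
  then have j: "j < r" by simp
  have "A * V = U * S * (transpose_mat V * V)"
    using f(1-3) unfolding f(11) by (subst assoc_mult_mat[of "U * S" n m]) auto
  then have AV: "A * V = U * S" using f by simp
  have "col (A * lead_cols V r) j = A *\<^sub>v col V j"
    using A f(2) j r by (simp add: col_mult2[of _ n m _ r] del: col_mult)
  also have "\<dots> = col (A * V) j"
    using A f(2) j r by (simp add: col_mult2[of _ n m _ m] del: col_mult)
  also have "\<dots> = U *\<^sub>v (S $$ (j,j) \<cdot>\<^sub>v unit_vec n j)"
    unfolding AV using f(1,3,8) j r by (simp add: col_mult2[of _ n n _ m] col_rect_diagonal del: col_mult)
  also have "\<dots> = S $$ (j,j) \<cdot>\<^sub>v col U j"
    using f(1) j r by (intro eq_vecI) (auto simp: mult_mat_vec)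
  finally show "col (A * lead_cols V r) j = col (lead_cols U r * mat_diag r (\<lambda>j. S $$ (j,j))) j"
    using f(1) j r by (simp add: col_mult_mat_diag[of _ n r])
qed (use A is_svdD(1)[OF svd A] in auto)

lemma svd_transpose_mult_lead_cols:
  fixes A :: "real mat"
  assumes svd: "is_svd A U S V" and A: "A \<in> carrier_mat n m" and r: "r \<le> min n m"
  shows "transpose_mat A * lead_cols U r = lead_cols V r * mat_diag r (\<lambda>j. S $$ (j,j))"
proof -
  have "mat_diag r (\<lambda>j. transpose_mat S $$ (j,j)) = mat_diag r (\<lambda>j. S $$ (j,j))"
    using is_svdD(3)[OF svd A] r by (intro eq_matI) (auto simp: mat_diag_def)
  then show ?thesis
    using svd_mult_lead_cols[of "transpose_mat A" V "transpose_mat S" U m n r]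
      is_svd_transpose[OF svd A] A r by (simp add: min.commute)
qed


section \<open>Wedin's sin theta bound\<close>

lemma vnorm_transpose_rect_diag_le:
  fixes S :: "real mat"
  assumes S: "S \<in> carrier_mat n m" and diag: "\<And>i j. i < n \<Longrightarrow> j < m \<Longrightarrow> i \<noteq> j \<Longrightarrow> S $$ (i,j) = 0"
    and bound: "\<And>j. r \<le> j \<Longrightarrow> j < min n m \<Longrightarrow> \<bar>S $$ (j,j)\<bar> \<le> c" and "0 \<le> c"
    and q: "q \<in> carrier_vec n" and q_lead: "\<And>j. j < r \<Longrightarrow> q $ j = 0"
  shows "vnorm (transpose_mat S *\<^sub>v q) \<le> c * vnorm q"
proof (rule power2_le_imp_le)
  have entry: "(transpose_mat S *\<^sub>v q) $ j = (if j < n then S $$ (j,j) * q $ j else 0)" if "j < m" for j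
    using S diag q that by (simp add: col_rect_diagonal)
  have "(vnorm (transpose_mat S *\<^sub>v q))\<^sup>2 = (\<Sum>j<m. ((transpose_mat S *\<^sub>v q) $ j)\<^sup>2)"
    using S q by (intro vnorm_power2_sum) simp
  also have "\<dots> \<le> (\<Sum>j<m. if j < n then c\<^sup>2 * (q $ j)\<^sup>2 else 0)"
  proof (rule sum_mono)
    fix j assume "j \<in> {..<m}"
    then have j: "j < m" by simp
    consider "j < r" | "r \<le> j" "j < n" | "n \<le> j" by linarith
    then show "((transpose_mat S *\<^sub>v q) $ j)\<^sup>2 \<le> (if j < n then c\<^sup>2 * (q $ j)\<^sup>2 else 0)"
    proof cases
      case 1
      then show ?thesis using j q_lead by (simp del: index_mult_mat_vec add: entry)
    next
      case 2
      then have "\<bar>S $$ (j,j)\<bar>\<^sup>2 \<le> c\<^sup>2"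
        using bound j by (intro power_mono) auto
      then show ?thesis
        using 2 j by (simp del: index_mult_mat_vec add: entry power_mult_distrib mult_right_mono)
    next
      case 3
      then show ?thesis using j by (simp del: index_mult_mat_vec add: entry)
    qed
  qed
  also have "\<dots> = (\<Sum>j\<in>{..<m} \<inter> {..<n}. c\<^sup>2 * (q $ j)\<^sup>2)"
    by (simp add: sum.inter_restrict lessThan_def)
  also have "\<dots> \<le> (\<Sum>j<n. c\<^sup>2 * (q $ j)\<^sup>2)"
    by (intro sum_mono2) auto
  also have "\<dots> = (c * vnorm q)\<^sup>2"
    by (simp add: power_mult_distrib vnorm_power2_sum[OF q] sum_distrib_left)
  finally show "(vnorm (transpose_mat S *\<^sub>v q))\<^sup>2 \<le> (c * vnorm q)\<^sup>2" .
  show "0 \<le> c * vnorm q" using \<open>0 \<le> c\<close> by (simp add: vnorm_nonneg)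
qed

lemma svd_transpose_vnorm_le_on_complement:
  fixes A :: "real mat"
  assumes svd: "is_svd A U S V" and A: "A \<in> carrier_mat n m" and r: "r < min n m"
    and w: "w \<in> carrier_vec n" "transpose_mat (lead_cols U r) *\<^sub>v w = 0\<^sub>v r"
  shows "vnorm (transpose_mat A *\<^sub>v w) \<le> S $$ (r, r) * vnorm w"
proof -
  note f = is_svdD[OF svd A]
  define q where "q = transpose_mat U *\<^sub>v w"
  have q: "q \<in> carrier_vec n" using f(1) w by (simp add: q_def)
  have q_lead: "q $ j = 0" if "j < r" for j
  proof -
    have "q $ j = col U j \<bullet> w"
      using f(1) w that r by (simp add: q_def)
    also have "\<dots> = (transpose_mat (lead_cols U r) *\<^sub>v w) $ j"
      using f(1) that r by simp
    finally show ?thesis using w(2) that by simp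
  qed
  have "transpose_mat A *\<^sub>v w = V *\<^sub>v (transpose_mat S *\<^sub>v q)"
    using f(1-3) w unfolding f(11) q_def
    by (simp add: transpose_mult[of _ n m _ m] transpose_mult[of _ n n _ m]
        assoc_mult_mat_vec[of _ m m _ n] assoc_mult_mat_vec[of _ m n _ n])
  then have "vnorm (transpose_mat A *\<^sub>v w) = vnorm (transpose_mat S *\<^sub>v q)"
    using f(2,3,5) q by (simp add: orthonormal_vnorm[of V m m])
  also have "\<dots> \<le> S $$ (r, r) * vnorm q"
    using f(9,10) r by (intro vnorm_transpose_rect_diag_le[OF f(3,8) _ _ q q_lead]) auto
  also have "vnorm q = vnorm w"
    using f(1,6) w unfolding q_def
    by (metis orthonormal_vnorm transpose_carrier_mat transpose_transpose)
  finally show ?thesis .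
qed

lemma svd_scalar_prod_le_on_complement:
  fixes A :: "real mat"
  assumes svd: "is_svd A U S V" and A: "A \<in> carrier_mat n m" and r: "r < min n m"
    and w: "w \<in> carrier_vec n" "transpose_mat (lead_cols U r) *\<^sub>v w = 0\<^sub>v r" and z: "z \<in> carrier_vec m"
  shows "w \<bullet> (A *\<^sub>v z) \<le> S $$ (r, r) * vnorm w * vnorm z"
proof -
  have "w \<bullet> (A *\<^sub>v z) = (transpose_mat A *\<^sub>v w) \<bullet> z"
    by (rule transpose_vec_mult_scalar[symmetric]) (use A w z in auto)
  also have "\<dots> \<le> vnorm (transpose_mat A *\<^sub>v w) * vnorm z"
    using A w z by (intro scalar_prod_le_vnorm[of _ m]) auto
  also have "\<dots> \<le> S $$ (r, r) * vnorm w * vnorm z"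
    using svd_transpose_vnorm_le_on_complement[OF svd A r w] vnorm_nonneg by (rule mult_right_mono)
  finally show ?thesis .
qed

lemma svd_gram_form_le_on_complement:
  fixes A :: "real mat"
  assumes svd: "is_svd A U S V" and A: "A \<in> carrier_mat n m" and r: "r < min n m"
    and w: "w \<in> carrier_vec n" "transpose_mat (lead_cols U r) *\<^sub>v w = 0\<^sub>v r"
    and c: "c \<in> carrier_vec r"
  shows "w \<bullet> (A *\<^sub>v (transpose_mat A *\<^sub>v (w + lead_cols U r *\<^sub>v c))) \<le> (S $$ (r, r))\<^sup>2 * (w \<bullet> w)"
proof -
  note f = is_svdD[OF svd A]
  let ?U1 = "lead_cols U r" and ?V1 = "lead_cols V r" and ?D = "mat_diag r (\<lambda>j. S $$ (j,j))"
  have U1: "?U1 \<in> carrier_mat n r" and V1: "?V1 \<in> carrier_mat m r" using f(1,2) by auto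
  have AU1: "transpose_mat A * ?U1 = ?V1 * ?D" and AV1: "A * ?V1 = ?U1 * ?D"
    using svd_transpose_mult_lead_cols[OF svd A] svd_mult_lead_cols[OF svd A] r by simp_all
  have "transpose_mat A *\<^sub>v (?U1 *\<^sub>v c) = (transpose_mat A * ?U1) *\<^sub>v c"
    using A U1 c by (simp add: assoc_mult_mat_vec[of _ m n _ r])
  also have "\<dots> = ?V1 *\<^sub>v (?D *\<^sub>v c)"
    unfolding AU1 using V1 c by (simp add: assoc_mult_mat_vec[of _ m r _ r])
  finally have "A *\<^sub>v (transpose_mat A *\<^sub>v (?U1 *\<^sub>v c)) = (A * ?V1) *\<^sub>v (?D *\<^sub>v c)"
    using A V1 mult_mat_vec_carrier[OF mat_diag_dim c] by (simp add: assoc_mult_mat_vec[of _ n m _ r])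
  also have "\<dots> = ?U1 *\<^sub>v (?D *\<^sub>v (?D *\<^sub>v c))"
    unfolding AV1 using U1 mult_mat_vec_carrier[OF mat_diag_dim c]
    by (simp add: assoc_mult_mat_vec[of _ n r _ r])
  finally have AAU1: "A *\<^sub>v (transpose_mat A *\<^sub>v (?U1 *\<^sub>v c)) = ?U1 *\<^sub>v (?D *\<^sub>v (?D *\<^sub>v c))" .
  have DDc: "?D *\<^sub>v (?D *\<^sub>v c) \<in> carrier_vec r"
    using c by (intro mult_mat_vec_carrier[OF mat_diag_dim])+
  have "(transpose_mat A *\<^sub>v w) \<bullet> (transpose_mat A *\<^sub>v (?U1 *\<^sub>v c))
      = w \<bullet> (A *\<^sub>v (transpose_mat A *\<^sub>v (?U1 *\<^sub>v c)))"
    by (rule transpose_vec_mult_scalar[OF A _ w(1)]) (use A U1 c in simp)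
  also have "\<dots> = (transpose_mat ?U1 *\<^sub>v w) \<bullet> (?D *\<^sub>v (?D *\<^sub>v c))"
    unfolding AAU1 by (rule transpose_vec_mult_scalar[OF U1 DDc w(1), symmetric])
  finally have cross: "(transpose_mat A *\<^sub>v w) \<bullet> (transpose_mat A *\<^sub>v (?U1 *\<^sub>v c)) = 0"
    using w(2) DDc by simp
  have "w \<bullet> (A *\<^sub>v (transpose_mat A *\<^sub>v (w + ?U1 *\<^sub>v c)))
      = (transpose_mat A *\<^sub>v w) \<bullet> (transpose_mat A *\<^sub>v w + transpose_mat A *\<^sub>v (?U1 *\<^sub>v c))"
    using A U1 w c by (simp add: transpose_vec_mult_scalar[of A n m] mult_add_distrib_mat_vec[of _ m n])
  also have "\<dots> = (vnorm (transpose_mat A *\<^sub>v w))\<^sup>2"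
    using A U1 w c cross by (simp add: scalar_prod_add_distrib[of _ m] vnorm_power2)
  also have "\<dots> \<le> (S $$ (r, r) * vnorm w)\<^sup>2"
    using svd_transpose_vnorm_le_on_complement[OF svd A r w] by (intro power_mono) (simp_all add: vnorm_nonneg)
  finally show ?thesis by (simp add: power_mult_distrib vnorm_power2)
qed

lemma orthonormal_projection_residual:
  fixes X Y :: "real mat"
  assumes X: "X \<in> carrier_mat n k" "transpose_mat X * X = 1\<^sub>m k"
    and Y: "Y \<in> carrier_mat n r" "transpose_mat Y * Y = 1\<^sub>m r"
    and x: "x \<in> carrier_vec r" "vnorm x = 1"
    and eig: "(transpose_mat (transpose_mat X * Y) * (transpose_mat X * Y)) *\<^sub>v x = \<mu> \<cdot>\<^sub>v x"
  defines "w \<equiv> Y *\<^sub>v x - X *\<^sub>v (transpose_mat X *\<^sub>v (Y *\<^sub>v x))"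
  shows "w \<in> carrier_vec n" "transpose_mat X *\<^sub>v w = 0\<^sub>v k"
    "transpose_mat Y *\<^sub>v w = (1 - \<mu>) \<cdot>\<^sub>v x" "w \<bullet> w = 1 - \<mu>"
proof -
  define c where "c = transpose_mat X *\<^sub>v (Y *\<^sub>v x)"
  have y: "Y *\<^sub>v x \<in> carrier_vec n" and c: "c \<in> carrier_vec k"
    using X Y x by (auto simp: c_def)
  show w: "w \<in> carrier_vec n" using X y by (simp add: w_def)
  have "transpose_mat X *\<^sub>v w = c - 1\<^sub>m k *\<^sub>v c"
    using X y c by (simp add: w_def c_def[symmetric] mult_minus_distrib_mat_vec[of _ k n] flip: X(2))
  then show Xw: "transpose_mat X *\<^sub>v w = 0\<^sub>v k"
    using c by simp
  have "transpose_mat (transpose_mat X * Y) = transpose_mat Y * X"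
    using X Y by (simp add: transpose_mult[of _ k n _ r])
  then have "transpose_mat Y *\<^sub>v (X *\<^sub>v c) = \<mu> \<cdot>\<^sub>v x"
    using eig X Y x by (simp add: c_def assoc_mult_mat_vec[of _ r n _ k] assoc_mult_mat_vec[of _ r k _ r]
        assoc_mult_mat_vec[of _ k n _ r])
  moreover have "transpose_mat Y *\<^sub>v (Y *\<^sub>v x) = x"
  proof -
    have "transpose_mat Y *\<^sub>v (Y *\<^sub>v x) = (transpose_mat Y * Y) *\<^sub>v x"
      using Y(1) x by (simp add: assoc_mult_mat_vec[of _ r n _ r])
    also have "\<dots> = x" unfolding Y(2) using x by simp
    finally show ?thesis .
  qed
  ultimately have "transpose_mat Y *\<^sub>v w = x - \<mu> \<cdot>\<^sub>v x"
    using X Y x c by (simp add: w_def c_def[symmetric] mult_minus_distrib_mat_vec[of _ r n])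
  then show Yw: "transpose_mat Y *\<^sub>v w = (1 - \<mu>) \<cdot>\<^sub>v x"
    using x by (auto simp: algebra_simps intro!: eq_vecI)
  have "w \<bullet> (X *\<^sub>v c) = 0"
    using X w c Xw by (simp flip: transpose_vec_mult_scalar[of X n k])
  then have "w \<bullet> w = w \<bullet> (Y *\<^sub>v x)"
    using X w y c by (simp add: w_def c_def[symmetric] scalar_prod_minus_distrib[of _ n])
  also have "\<dots> = (1 - \<mu>) * (x \<bullet> x)"
    using Y w x Yw by (simp flip: transpose_vec_mult_scalar[of Y n r])
  finally show "w \<bullet> w = 1 - \<mu>"
    using x by (simp flip: vnorm_power2)
qed


lemma wedin_quotient_bound:
  fixes lam tau t s E F :: real
  assumes "0 \<le> lam" "t \<le> tau" "s < t" "0 \<le> s" "0 \<le> E" "0 \<le> F"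
    and quadratic: "lam * tau\<^sup>2 \<le> s\<^sup>2 * lam + sqrt lam * (s * F + E * tau)"
  shows "sqrt lam \<le> (t * E + s * F) / (t\<^sup>2 - s\<^sup>2)"
proof -
  define q where "q = sqrt lam"
  have q: "0 \<le> q" "q\<^sup>2 = lam" using assms(1) by (simp_all add: q_def)
  have t_gap: "0 < t\<^sup>2 - s\<^sup>2" and tau_gap: "0 < tau\<^sup>2 - s\<^sup>2"
    using assms(2-4) by (simp_all add: power_strict_mono)
  have "q * (t\<^sup>2 - s\<^sup>2) \<le> s * F + E * t"
  proof (cases "q = 0")
    case True
    then show ?thesis using assms by simp
  next
    case False
    have "q\<^sup>2 * tau\<^sup>2 \<le> s\<^sup>2 * q\<^sup>2 + q * (s * F + E * tau)"
      using quadratic q(2) by (simp add: q_def)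
    then have "q * (q * (tau\<^sup>2 - s\<^sup>2)) \<le> q * (s * F + E * tau)"
      by (simp add: algebra_simps power2_eq_square)
    then have "q * (tau\<^sup>2 - s\<^sup>2) \<le> s * F + E * tau"
      using False q(1) by simp
    \<comment> \<open>the quotient \<open>(s F + E \<tau>) / (\<tau>\<^sup>2 - s\<^sup>2)\<close> decreases in \<open>\<tau> > s\<close>\<close>
    moreover have "(s * F + E * tau) * (t\<^sup>2 - s\<^sup>2) \<le> (s * F + E * t) * (tau\<^sup>2 - s\<^sup>2)"
    proof -
      have "(s * F + E * t) * (tau\<^sup>2 - s\<^sup>2) - (s * F + E * tau) * (t\<^sup>2 - s\<^sup>2)
          = s * F * (tau\<^sup>2 - t\<^sup>2) + E * (tau - t) * (t * tau + s\<^sup>2)"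
        by (simp add: algebra_simps power2_eq_square)
      moreover have "0 \<le> s * F * (tau\<^sup>2 - t\<^sup>2)"
        using assms(2-6) by (intro mult_nonneg_nonneg) (simp_all add: power_mono)
      moreover have "0 \<le> E * (tau - t) * (t * tau + s\<^sup>2)"
        using assms(2-6) by (intro mult_nonneg_nonneg add_nonneg_nonneg) simp_all
      ultimately show ?thesis by linarith
    qed
    ultimately have "q * (tau\<^sup>2 - s\<^sup>2) * (t\<^sup>2 - s\<^sup>2) \<le> (s * F + E * t) * (tau\<^sup>2 - s\<^sup>2)"
      using t_gap by (meson less_imp_le mult_right_mono order_trans)
    then have "(q * (t\<^sup>2 - s\<^sup>2)) * (tau\<^sup>2 - s\<^sup>2) \<le> (s * F + E * t) * (tau\<^sup>2 - s\<^sup>2)"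
      by (simp add: ac_simps)
    then show ?thesis using tau_gap by simp
  qed
  then show ?thesis
    using t_gap by (simp add: q_def le_divide_eq algebra_simps)
qed

lemma wedin_quotient_le_gap:
  fixes t s E F N :: real
  assumes "s < t" "0 \<le> s" "0 \<le> E" "E \<le> N" "0 \<le> F" "F \<le> N"
  shows "(t * E + s * F) / (t\<^sup>2 - s\<^sup>2) \<le> N / (t - s)"
proof -
  have "t * E + s * F \<le> (t + s) * N"
    using assms by (simp add: distrib_right add_mono mult_left_mono)
  then have "(t * E + s * F) / ((t - s) * (t + s)) \<le> (t + s) * N / ((t - s) * (t + s))"
    using assms by (intro divide_right_mono) auto
  also have "\<dots> = N / (t - s)" using assms by simp
  finally show ?thesis by (simp add: algebra_simps power2_eq_square)
qed


lemma svd_perturbation_identity: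
  fixes A B :: "real mat"
  assumes svd: "is_svd B U S V" and A: "A \<in> carrier_mat n m" and B: "B \<in> carrier_mat n m"
    and r: "r \<le> min n m" and x: "x \<in> carrier_vec r"
  defines "D \<equiv> mat_diag r (\<lambda>j. S $$ (j, j))"
  shows "lead_cols U r *\<^sub>v (D *\<^sub>v (D *\<^sub>v x)) = A *\<^sub>v (transpose_mat A *\<^sub>v (lead_cols U r *\<^sub>v x))
      + A *\<^sub>v (transpose_mat (B - A) *\<^sub>v (lead_cols U r *\<^sub>v x)) + (B - A) *\<^sub>v (lead_cols V r *\<^sub>v (D *\<^sub>v x))"
proof -
  note f = is_svdD[OF svd B]
  let ?U1 = "lead_cols U r" and ?V1 = "lead_cols V r"
  have U1: "?U1 \<in> carrier_mat n r" and V1: "?V1 \<in> carrier_mat m r" using f(1,2) by auto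
  have BmA: "B - A \<in> carrier_mat n m" using A B by (intro minus_carrier_mat) auto
  have B_split: "B = A + (B - A)" using A B by (intro eq_matI) auto
  have Dx: "D *\<^sub>v x \<in> carrier_vec r" unfolding D_def using mat_diag_dim x by (rule mult_mat_vec_carrier)
  have y: "?U1 *\<^sub>v x \<in> carrier_vec n" using U1 x by simp
  have "?V1 *\<^sub>v (D *\<^sub>v x) = (transpose_mat B * ?U1) *\<^sub>v x"
    using svd_transpose_mult_lead_cols[OF svd B r] V1 x by (simp add: D_def assoc_mult_mat_vec[of _ m r _ r])
  also have "\<dots> = transpose_mat (A + (B - A)) *\<^sub>v (?U1 *\<^sub>v x)"
    using B U1 x B_split by (simp add: assoc_mult_mat_vec[of _ m n _ r])
  also have "\<dots> = transpose_mat A *\<^sub>v (?U1 *\<^sub>v x) + transpose_mat (B - A) *\<^sub>v (?U1 *\<^sub>v x)"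
    unfolding transpose_add[OF A BmA] by (rule add_mult_distrib_mat_vec) (use A BmA y in auto)
  finally have V1Dx: "?V1 *\<^sub>v (D *\<^sub>v x) = transpose_mat A *\<^sub>v (?U1 *\<^sub>v x) + transpose_mat (B - A) *\<^sub>v (?U1 *\<^sub>v x)" .
  have "?U1 *\<^sub>v (D *\<^sub>v (D *\<^sub>v x)) = (B * ?V1) *\<^sub>v (D *\<^sub>v x)"
    using svd_mult_lead_cols[OF svd B r] U1 Dx by (simp add: D_def assoc_mult_mat_vec[of _ n r _ r])
  also have "\<dots> = (A + (B - A)) *\<^sub>v (?V1 *\<^sub>v (D *\<^sub>v x))"
    using B V1 Dx B_split by (simp add: assoc_mult_mat_vec[of _ n m _ r])
  also have "\<dots> = A *\<^sub>v (?V1 *\<^sub>v (D *\<^sub>v x)) + (B - A) *\<^sub>v (?V1 *\<^sub>v (D *\<^sub>v x))"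
    by (rule add_mult_distrib_mat_vec) (use A BmA V1 Dx in auto)
  moreover have "A *\<^sub>v (?V1 *\<^sub>v (D *\<^sub>v x))
      = A *\<^sub>v (transpose_mat A *\<^sub>v (?U1 *\<^sub>v x)) + A *\<^sub>v (transpose_mat (B - A) *\<^sub>v (?U1 *\<^sub>v x))"
    unfolding V1Dx by (rule mult_add_distrib_mat_vec) (use A BmA y in auto)
  ultimately show ?thesis by simp
qed

lemma scalar_prod_mat_diag_square:
  fixes Y :: "real mat"
  assumes Y: "Y \<in> carrier_mat n r" and w: "w \<in> carrier_vec n" and x: "x \<in> carrier_vec r"
    and Yw: "transpose_mat Y *\<^sub>v w = lam \<cdot>\<^sub>v x"
  shows "w \<bullet> (Y *\<^sub>v (mat_diag r f *\<^sub>v (mat_diag r f *\<^sub>v x))) = lam * (vnorm (mat_diag r f *\<^sub>v x))\<^sup>2"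
proof -
  let ?D = "mat_diag r f"
  have Dx: "?D *\<^sub>v x \<in> carrier_vec r" using mat_diag_dim x by (rule mult_mat_vec_carrier)
  have DDx: "?D *\<^sub>v (?D *\<^sub>v x) \<in> carrier_vec r" using mat_diag_dim Dx by (rule mult_mat_vec_carrier)
  have "w \<bullet> (Y *\<^sub>v (?D *\<^sub>v (?D *\<^sub>v x))) = (lam \<cdot>\<^sub>v x) \<bullet> (?D *\<^sub>v (?D *\<^sub>v x))"
    unfolding Yw[symmetric] by (rule transpose_vec_mult_scalar[symmetric]) (use Y w DDx in auto)
  also have "\<dots> = lam * ((transpose_mat ?D *\<^sub>v x) \<bullet> (?D *\<^sub>v x))"
    using transpose_vec_mult_scalar[of ?D r r "?D *\<^sub>v x" x] x Dx by simp
  finally show ?thesis using Dx by (simp add: vnorm_power2)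
qed

lemma wedin_quadratic_inequality:
  fixes A B U S V Ub Sb Vb :: "real mat"
  assumes A: "A \<in> carrier_mat n m" and B: "B \<in> carrier_mat n m" and r: "r < min n m"
    and svdA: "is_svd A U S V" and svdB: "is_svd B Ub Sb Vb" and x: "x \<in> carrier_vec r" "vnorm x = 1"
    and w: "w \<in> carrier_vec n" "transpose_mat (lead_cols U r) *\<^sub>v w = 0\<^sub>v r"
      "transpose_mat (lead_cols Ub r) *\<^sub>v w = lam \<cdot>\<^sub>v x" "w \<bullet> w = lam"
    and c: "c \<in> carrier_vec r" and y_split: "lead_cols Ub r *\<^sub>v x = w + lead_cols U r *\<^sub>v c"
  defines "g \<equiv> mat_diag r (\<lambda>j. Sb $$ (j, j)) *\<^sub>v x"
  shows "lam * (vnorm g)\<^sup>2 \<le> (S $$ (r, r))\<^sup>2 * lam + sqrt lam *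
    (S $$ (r, r) * spec_norm (transpose_mat (B - A) * lead_cols Ub r)
      + spec_norm ((B - A) * lead_cols Vb r) * vnorm g)"
proof -
  let ?Ub1 = "lead_cols Ub r" and ?Vb1 = "lead_cols Vb r"
  define dA where "dA = B - A"
  define s where "s = S $$ (r, r)"
  have s: "0 \<le> s" using is_svdD(9)[OF svdA A r] by (simp add: s_def)
  have dA: "dA \<in> carrier_mat n m" using A B by (simp add: dA_def minus_carrier_mat)
  have r_le: "r \<le> min n m" using r by simp
  note Ub1 = svd_lead_cols_orthonormal(1)[OF svdB B r_le]
    and Vb1 = svd_lead_cols_orthonormal(3)[OF svdB B r_le]
  have y: "?Ub1 *\<^sub>v x \<in> carrier_vec n" using Ub1 x by simp
  have g: "g \<in> carrier_vec r" unfolding g_def using mat_diag_dim x(1) by (rule mult_mat_vec_carrier)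
  have lam: "vnorm w = sqrt lam" "0 \<le> lam"
    using w(4) scalar_prod_self_nonneg[of w] by (simp_all add: vnorm_eq_sqrt_scalar_prod)
  have "lam * (vnorm g)\<^sup>2 = w \<bullet> (?Ub1 *\<^sub>v (mat_diag r (\<lambda>j. Sb $$ (j, j)) *\<^sub>v g))"
    using scalar_prod_mat_diag_square[OF Ub1 w(1) x(1) w(3)] by (simp add: g_def)
  also have "\<dots> = w \<bullet> (A *\<^sub>v (transpose_mat A *\<^sub>v (?Ub1 *\<^sub>v x)))
      + w \<bullet> (A *\<^sub>v (transpose_mat dA *\<^sub>v (?Ub1 *\<^sub>v x))) + w \<bullet> (dA *\<^sub>v (?Vb1 *\<^sub>v g))"
    using svd_perturbation_identity[OF svdB A B r_le x(1)] w(1) A dA y Vb1 g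
    by (simp add: dA_def g_def scalar_prod_add_distrib[of _ n])
  also have "\<dots> \<le> s\<^sup>2 * lam + sqrt lam * (s * spec_norm (transpose_mat dA * ?Ub1))
      + sqrt lam * (spec_norm (dA * ?Vb1) * vnorm g)"
  proof (intro add_mono)
    show "w \<bullet> (A *\<^sub>v (transpose_mat A *\<^sub>v (?Ub1 *\<^sub>v x))) \<le> s\<^sup>2 * lam"
      using svd_gram_form_le_on_complement[OF svdA A r w(1,2) c] y_split w(4) by (simp add: s_def)
    have "w \<bullet> (A *\<^sub>v (transpose_mat dA *\<^sub>v (?Ub1 *\<^sub>v x)))
        \<le> s * sqrt lam * vnorm (transpose_mat dA *\<^sub>v (?Ub1 *\<^sub>v x))"
      using svd_scalar_prod_le_on_complement[OF svdA A r w(1,2), of "transpose_mat dA *\<^sub>v (?Ub1 *\<^sub>v x)"]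
        dA y lam(1) by (simp add: s_def)
    also have "\<dots> \<le> s * sqrt lam * (spec_norm (transpose_mat dA * ?Ub1) * vnorm x)"
      using vnorm_mult_mat_vec_le[of "transpose_mat dA * ?Ub1" m r x] dA Ub1 x(1) s lam(2)
      by (intro mult_left_mono) simp_all
    finally show "w \<bullet> (A *\<^sub>v (transpose_mat dA *\<^sub>v (?Ub1 *\<^sub>v x)))
        \<le> sqrt lam * (s * spec_norm (transpose_mat dA * ?Ub1))"
      using x(2) by (simp add: ac_simps)
    have "w \<bullet> (dA *\<^sub>v (?Vb1 *\<^sub>v g)) \<le> vnorm w * vnorm (dA *\<^sub>v (?Vb1 *\<^sub>v g))"
      using w(1) dA Vb1 g by (intro scalar_prod_le_vnorm[of _ n]) auto
    also have "\<dots> \<le> sqrt lam * (spec_norm (dA * ?Vb1) * vnorm g)"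
      unfolding lam(1) using vnorm_mult_mat_vec_le[of "dA * ?Vb1" n r g] dA Vb1 g lam(2)
      by (intro mult_left_mono) simp_all
    finally show "w \<bullet> (dA *\<^sub>v (?Vb1 *\<^sub>v g)) \<le> sqrt lam * (spec_norm (dA * ?Vb1) * vnorm g)" .
  qed
  finally show ?thesis by (simp add: s_def dA_def algebra_simps)
qed

lemma wedin_eigen_bound:
  fixes A B U S V Ub Sb Vb :: "real mat"
  assumes A: "A \<in> carrier_mat n m" and B: "B \<in> carrier_mat n m"
    and r: "1 \<le> r" "r < min n m"
    and svdA: "is_svd A U S V" and svdB: "is_svd B Ub Sb Vb"
    and gap: "sval S (r + 1) < sval Sb r"
    and x: "x \<in> carrier_vec r" "vnorm x = 1"
    and eig: "(transpose_mat (transpose_mat (lead_cols U r) * lead_cols Ub r) *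
               (transpose_mat (lead_cols U r) * lead_cols Ub r)) *\<^sub>v x = \<mu> \<cdot>\<^sub>v x"
  shows "0 \<le> 1 - \<mu> \<and> sqrt (1 - \<mu>) \<le>
    (sval Sb r * spec_norm ((B - A) * lead_cols Vb r)
      + sval S (r + 1) * spec_norm (transpose_mat (B - A) * lead_cols Ub r))
    / ((sval Sb r)\<^sup>2 - (sval S (r + 1))\<^sup>2)"
proof -
  let ?U1 = "lead_cols U r" and ?Ub1 = "lead_cols Ub r"
  have r_le: "r \<le> min n m" using r by simp
  note U1 = svd_lead_cols_orthonormal(1,2)[OF svdA A r_le]
    and Ub1 = svd_lead_cols_orthonormal(1,2)[OF svdB B r_le]
  define c where "c = transpose_mat ?U1 *\<^sub>v (?Ub1 *\<^sub>v x)"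
  define w where "w = ?Ub1 *\<^sub>v x - ?U1 *\<^sub>v c"
  note residual = orthonormal_projection_residual[OF U1 Ub1 x eig, folded c_def, folded w_def]
  have c: "c \<in> carrier_vec r" using U1 Ub1 x by (simp add: c_def)
  have "?Ub1 *\<^sub>v x = w + ?U1 *\<^sub>v c"
    using is_svdD(1)[OF svdA A] is_svdD(1)[OF svdB B] x c by (auto simp: w_def intro!: eq_vecI)
  note quadratic = wedin_quadratic_inequality[OF A B r(2) svdA svdB x residual(1-4) c this]
  have lam: "0 \<le> 1 - \<mu>" using residual(4) scalar_prod_self_nonneg[of w] by simp
  have sval: "sval S (r + 1) = S $$ (r, r)" "sval Sb r = Sb $$ (r - 1, r - 1)"
    using is_svdD(3)[OF svdA A] is_svdD(3)[OF svdB B] r by (auto simp: sval_def)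
  have "sqrt (1 - \<mu>) \<le> (Sb $$ (r - 1, r - 1) * spec_norm ((B - A) * lead_cols Vb r)
      + S $$ (r, r) * spec_norm (transpose_mat (B - A) * ?Ub1)) / ((Sb $$ (r - 1, r - 1))\<^sup>2 - (S $$ (r, r))\<^sup>2)"
    using gap unfolding sval
    by (intro wedin_quotient_bound[OF lam svd_lead_diag_vnorm_ge[OF svdB B r(1) r_le x] _
          is_svdD(9)[OF svdA A r(2)] spec_norm_nonneg spec_norm_nonneg quadratic])
  then show ?thesis using lam unfolding sval by simp
qed


lemma wedin_eigen_bound_cogram:
  fixes A B U S V Ub Sb Vb :: "real mat"
  assumes A: "A \<in> carrier_mat n m" and B: "B \<in> carrier_mat n m"
    and r: "1 \<le> r" "r < min n m"
    and svdA: "is_svd A U S V" and svdB: "is_svd B Ub Sb Vb"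
    and gap: "sval Sb (r + 1) < sval S r"
    and x: "x \<in> carrier_vec r" "vnorm x = 1"
    and eig: "((transpose_mat (lead_cols U r) * lead_cols Ub r) *
               transpose_mat (transpose_mat (lead_cols U r) * lead_cols Ub r)) *\<^sub>v x = \<mu> \<cdot>\<^sub>v x"
  shows "0 \<le> 1 - \<mu> \<and> sqrt (1 - \<mu>) \<le>
    (sval S r * spec_norm ((B - A) * lead_cols V r)
      + sval Sb (r + 1) * spec_norm (transpose_mat (lead_cols U r) * (B - A)))
    / ((sval S r)\<^sup>2 - (sval Sb (r + 1))\<^sup>2)"
proof -
  let ?U1 = "lead_cols U r" and ?Ub1 = "lead_cols Ub r"
  have U1: "?U1 \<in> carrier_mat n r" and Ub1: "?Ub1 \<in> carrier_mat n r"
    using is_svdD(1)[OF svdA A] is_svdD(1)[OF svdB B] by auto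
  have BA: "B - A \<in> carrier_mat n m" using A B by (intro minus_carrier_mat) auto
  have AB: "A - B = - (B - A)" using A B by (intro eq_matI) auto
  have "transpose_mat (transpose_mat ?Ub1 * ?U1) * (transpose_mat ?Ub1 * ?U1)
      = (transpose_mat ?U1 * ?Ub1) * transpose_mat (transpose_mat ?U1 * ?Ub1)"
    using U1 Ub1 by (simp add: transpose_mult[of _ r n _ r])
  then have "0 \<le> 1 - \<mu> \<and> sqrt (1 - \<mu>) \<le>
    (sval S r * spec_norm ((A - B) * lead_cols V r)
      + sval Sb (r + 1) * spec_norm (transpose_mat (A - B) * ?U1))
     / ((sval S r)\<^sup>2 - (sval Sb (r + 1))\<^sup>2)"
    using wedin_eigen_bound[OF B A r svdB svdA gap x] eig by simp
  moreover have "spec_norm ((A - B) * lead_cols V r) = spec_norm ((B - A) * lead_cols V r)"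
    using uminus_mult_left_mat[of "B - A" "lead_cols V r"] carrier_matD[OF BA] is_svdD(2)[OF svdA A]
    by (simp add: AB spec_norm_uminus)
  moreover have "spec_norm (transpose_mat (A - B) * ?U1) = spec_norm (transpose_mat ?U1 * (B - A))"
    using uminus_mult_left_mat[of "transpose_mat (B - A)" ?U1] carrier_matD[OF BA] carrier_matD[OF U1]
      spec_norm_transpose_mult_comm[OF BA U1]
    by (simp add: AB transpose_uminus spec_norm_uminus)
  ultimately show ?thesis by simp
qed

(* HOL's sqrt is negative on negative arguments, so the entries of sin_theta are bounded only
   where 1 - sing_val^2 is known to be nonnegative. *)
lemma spec_norm_sin_theta_le:
  fixes X Y :: "real mat"
  assumes X: "X \<in> carrier_mat n r" and "0 \<le> c"
    and bound: "\<And>i. i < r \<Longrightarrow> 0 \<le> 1 - (sing_val (transpose_mat X * Y) (Suc i))\<^sup>2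
      \<and> sqrt (1 - (sing_val (transpose_mat X * Y) (Suc i))\<^sup>2) \<le> c"
  shows "spec_norm (sin_theta X Y) \<le> c"
proof -
  have "sin_theta X Y = mat_diag r (\<lambda>i. sqrt (1 - (sing_val (transpose_mat X * Y) (Suc i))\<^sup>2))"
    using X by (intro eq_matI) (auto simp: sin_theta_def mat_diag_def)
  then show ?thesis
    using bound \<open>0 \<le> c\<close> by (simp add: spec_norm_mat_diag_le)
qed

lemma spec_norm_sin_theta_le_gram:
  fixes X Y :: "real mat"
  assumes X: "X \<in> carrier_mat n r" and Y: "Y \<in> carrier_mat n r" and "0 \<le> c"
    and bound: "\<And>x \<mu>. x \<in> carrier_vec r \<Longrightarrow> vnorm x = 1 \<Longrightarrow>
      (transpose_mat (transpose_mat X * Y) * (transpose_mat X * Y)) *\<^sub>v x = \<mu> \<cdot>\<^sub>v x \<Longrightarrow>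
      0 \<le> 1 - \<mu> \<and> sqrt (1 - \<mu>) \<le> c"
  shows "spec_norm (sin_theta X Y) \<le> c"
proof (rule spec_norm_sin_theta_le[OF X \<open>0 \<le> c\<close>])
  fix i assume "i < r"
  then show "0 \<le> 1 - (sing_val (transpose_mat X * Y) (Suc i))\<^sup>2
      \<and> sqrt (1 - (sing_val (transpose_mat X * Y) (Suc i))\<^sup>2) \<le> c"
    using sing_val_eigenvector(1)[of "transpose_mat X * Y" r i] X Y bound by auto
qed

lemma spec_norm_sin_theta_le_cogram:
  fixes X Y :: "real mat"
  assumes X: "X \<in> carrier_mat n r" and Y: "Y \<in> carrier_mat n r" and "0 \<le> c"
    and bound: "\<And>x \<mu>. x \<in> carrier_vec r \<Longrightarrow> vnorm x = 1 \<Longrightarrow>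
      ((transpose_mat X * Y) * transpose_mat (transpose_mat X * Y)) *\<^sub>v x = \<mu> \<cdot>\<^sub>v x \<Longrightarrow>
      0 \<le> 1 - \<mu> \<and> sqrt (1 - \<mu>) \<le> c"
  shows "spec_norm (sin_theta X Y) \<le> c"
proof (rule spec_norm_sin_theta_le[OF X \<open>0 \<le> c\<close>])
  fix i assume "i < r"
  then show "0 \<le> 1 - (sing_val (transpose_mat X * Y) (Suc i))\<^sup>2
      \<and> sqrt (1 - (sing_val (transpose_mat X * Y) (Suc i))\<^sup>2) \<le> c"
    using sing_val_eigenvector(2)[of "transpose_mat X * Y" r i] X Y bound by auto
qed

lemma sin_theta_lead_cols_le:
  fixes A B U S V Ub Sb Vb :: "real mat"
  assumes A: "A \<in> carrier_mat n m" and B: "B \<in> carrier_mat n m"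
    and r: "1 \<le> r" "r < min n m"
    and svdA: "is_svd A U S V" and svdB: "is_svd B Ub Sb Vb"
    and gapA: "sval Sb (r + 1) < sval S r" and gapB: "sval S (r + 1) < sval Sb r"
  shows "spec_norm (sin_theta (lead_cols U r) (lead_cols Ub r)) \<le> min
      ((sval Sb r * spec_norm ((B - A) * lead_cols Vb r)
        + sval S (r + 1) * spec_norm (transpose_mat (B - A) * lead_cols Ub r))
       / ((sval Sb r)\<^sup>2 - (sval S (r + 1))\<^sup>2))
      ((sval S r * spec_norm ((B - A) * lead_cols V r)
        + sval Sb (r + 1) * spec_norm (transpose_mat (lead_cols U r) * (B - A)))
       / ((sval S r)\<^sup>2 - (sval Sb (r + 1))\<^sup>2))" (is "?l \<le> min ?gram ?cogram")
proof -
  have U1: "lead_cols U r \<in> carrier_mat n r" and Ub1: "lead_cols Ub r \<in> carrier_mat n r"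
    using is_svdD(1)[OF svdA A] is_svdD(1)[OF svdB B] by auto
  have quotient_nonneg: "0 \<le> (t * E + s * F) / (t\<^sup>2 - s\<^sup>2)"
    if "0 \<le> s" "s < t" "0 \<le> E" "0 \<le> F" for s t E F :: real
    using that by (intro divide_nonneg_pos) (simp_all add: power_strict_mono)
  have "?l \<le> ?gram"
    using wedin_eigen_bound[OF A B r svdA svdB gapB]
    by (intro spec_norm_sin_theta_le_gram[OF U1 Ub1] quotient_nonneg sval_nonneg[OF svdA A] gapB
        spec_norm_nonneg)
  moreover have "?l \<le> ?cogram"
    using wedin_eigen_bound_cogram[OF A B r svdA svdB gapA]
    by (intro spec_norm_sin_theta_le_cogram[OF U1 Ub1] quotient_nonneg sval_nonneg[OF svdB B] gapA
        spec_norm_nonneg)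
  ultimately show ?thesis by simp
qed


lemma sin_theta_lead_cols_le_gap:
  fixes A B U S V Ub Sb Vb :: "real mat"
  assumes A: "A \<in> carrier_mat n m" and B: "B \<in> carrier_mat n m"
    and r: "1 \<le> r" "r < min n m"
    and svdA: "is_svd A U S V" and svdB: "is_svd B Ub Sb Vb"
    and gapA: "sval Sb (r + 1) < sval S r" and gapB: "sval S (r + 1) < sval Sb r"
  shows "spec_norm (sin_theta (lead_cols U r) (lead_cols Ub r)) \<le>
    min (1 / (sval S r - sval Sb (r + 1))) (1 / (sval Sb r - sval S (r + 1))) * spec_norm (B - A)"
proof -
  have BA: "B - A \<in> carrier_mat n m" using A B by (intro minus_carrier_mat) auto
  have r_le: "r \<le> min n m" using r by simp
  note U1 = svd_lead_cols_orthonormal(1,2)[OF svdA A r_le] and V1 = svd_lead_cols_orthonormal(3,4)[OF svdA A r_le]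
    and Ub1 = svd_lead_cols_orthonormal(1,2)[OF svdB B r_le] and Vb1 = svd_lead_cols_orthonormal(3,4)[OF svdB B r_le]
  have first: "(sval Sb r * spec_norm ((B - A) * lead_cols Vb r)
        + sval S (r + 1) * spec_norm (transpose_mat (B - A) * lead_cols Ub r))
       / ((sval Sb r)\<^sup>2 - (sval S (r + 1))\<^sup>2) \<le> spec_norm (B - A) / (sval Sb r - sval S (r + 1))"
    using spec_norm_mult_orthonormal_le[OF BA Vb1] spec_norm_transpose[of "B - A"]
      spec_norm_mult_orthonormal_le[of "transpose_mat (B - A)" m n, OF _ Ub1] BA
    by (intro wedin_quotient_le_gap gapB sval_nonneg[OF svdA A] spec_norm_nonneg) auto
  have second: "(sval S r * spec_norm ((B - A) * lead_cols V r)
        + sval Sb (r + 1) * spec_norm (transpose_mat (lead_cols U r) * (B - A)))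
       / ((sval S r)\<^sup>2 - (sval Sb (r + 1))\<^sup>2) \<le> spec_norm (B - A) / (sval S r - sval Sb (r + 1))"
    using spec_norm_mult_orthonormal_le[OF BA V1] spec_norm_transpose_mult_orthonormal_le[OF BA U1]
    by (intro wedin_quotient_le_gap gapA sval_nonneg[OF svdB B] spec_norm_nonneg)
  have "min (1 / (sval S r - sval Sb (r + 1))) (1 / (sval Sb r - sval S (r + 1))) * spec_norm (B - A)
      = min (spec_norm (B - A) / (sval S r - sval Sb (r + 1))) (spec_norm (B - A) / (sval Sb r - sval S (r + 1)))"
    using spec_norm_nonneg[of "B - A"] by (simp add: min_mult_distrib_right)
  then show ?thesis
    using sin_theta_lead_cols_le[OF A B r svdA svdB gapA gapB] first second by linarith
qed


theorem theorem3p1: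
  fixes A dA U S V Ut St Vt :: "real mat" and n m r :: nat
  assumes A: "A \<in> carrier_mat n m" and dA: "dA \<in> carrier_mat n m"
    and r1: "1 \<le> r" and rlt: "r < min n m"
    and rk: "vec_space.rank n A \<ge> r"
    and svdA: "is_svd A U S V"
    and svdAt: "is_svd (A + dA) Ut St Vt"
    and gap1: "sval S r - sval St (r+1) > 0"
    and gap2: "sval St r - sval S (r+1) > 0"
  defines "U1 \<equiv> lead_cols U r" and "V1 \<equiv> lead_cols V r"
    and "Ut1 \<equiv> lead_cols Ut r" and "Vt1 \<equiv> lead_cols Vt r"
    and "s_r \<equiv> sval S r" and "s_r1 \<equiv> sval S (r+1)"
    and "t_r \<equiv> sval St r" and "t_r1 \<equiv> sval St (r+1)"
  shows
    "spec_norm (sin_theta U1 Ut1) \<le>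
       min ((t_r * spec_norm (dA * Vt1) + s_r1 * spec_norm (transpose_mat dA * Ut1)) / (t_r^2 - s_r1^2))
           ((s_r * spec_norm (dA * V1) + t_r1 * spec_norm (transpose_mat U1 * dA)) / (s_r^2 - t_r1^2))
     \<and> spec_norm (sin_theta V1 Vt1) \<le>
       min ((t_r * spec_norm (transpose_mat Ut1 * dA) + s_r1 * spec_norm (dA * Vt1)) / (t_r^2 - s_r1^2))
           ((s_r * spec_norm (transpose_mat U1 * dA) + t_r1 * spec_norm (dA * V1)) / (s_r^2 - t_r1^2))
     \<and> max (spec_norm (sin_theta U1 Ut1)) (spec_norm (sin_theta V1 Vt1)) \<le>
       min (1 / (s_r - t_r1)) (1 / (t_r - s_r1)) * spec_norm dA"
proof -
  have B: "A + dA \<in> carrier_mat n m" using A dA by simp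
  have AT: "transpose_mat A \<in> carrier_mat m n" and BT: "transpose_mat (A + dA) \<in> carrier_mat m n"
    using A B by simp_all
  have diff: "A + dA - A = dA" "transpose_mat (A + dA) - transpose_mat A = transpose_mat dA"
    using A dA by (auto intro!: eq_matI)
  have r: "1 \<le> r" "r < min m n" using r1 rlt by simp_all
  have gaps: "sval St (r + 1) < sval S r" "sval S (r + 1) < sval St r" using gap1 gap2 by simp_all
  have gapsT: "sval (transpose_mat St) (r + 1) < sval (transpose_mat S) r"
    "sval (transpose_mat S) (r + 1) < sval (transpose_mat St) r" using gaps by simp_all
  note svdT = is_svd_transpose[OF svdA A] is_svd_transpose[OF svdAt B]
  have U1: "U1 \<in> carrier_mat n r" and Ut1: "Ut1 \<in> carrier_mat n r" and V1: "V1 \<in> carrier_mat m r"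
    using is_svdD(1,2)[OF svdA A] is_svdD(1)[OF svdAt B] by (simp_all add: U1_def Ut1_def V1_def)
  have "spec_norm (transpose_mat V1 * transpose_mat dA) = spec_norm (dA * V1)"
    using dA V1 spec_norm_transpose[of "dA * V1"] by (simp add: transpose_mult[of _ n m _ r])
  then show ?thesis
    using sin_theta_lead_cols_le[OF A B r1 rlt svdA svdAt gaps]
      sin_theta_lead_cols_le[OF AT BT r svdT gapsT]
      sin_theta_lead_cols_le_gap[OF A B r1 rlt svdA svdAt gaps]
      sin_theta_lead_cols_le_gap[OF AT BT r svdT gapsT]
      spec_norm_transpose_mult_comm[OF dA Ut1] spec_norm_transpose_mult_comm[OF dA U1]
    unfolding diff spec_norm_transpose
    by (simp add: U1_def V1_def Ut1_def Vt1_def s_r_def s_r1_def t_r_def t_r1_def del: One_nat_def)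
qed

end
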